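(* Let $n\in\mathbb N$ and let $a,b_1,\dots,b_n,c_1,\dots,c_n$ be complex numbers with $\operatorname{Re}(a)>\operatorname{Re}(b_1+\dots+b_n)>0$ and $\operatorname{Re}(c_k)>\operatorname{Re}(b_k)>0$ for $k=1,\dots,n$. Then, as the positive reals $y_1,\dots,y_n$ all tend to $0$, $$\lim_{y_1,\dots,y_n\to 0}\Big\{y_1^{-b_1}\cdots y_n^{-b_n}\,F_A^{(n)}\Big[a,b_1,\dots,b_n;c_1,\dots,c_n;1-\tfrac{1}{y_1},\dots,1-\tfrac{1}{y_n}\Big]\Big\}=\frac{\Gamma(a-b_1-\dots-b_n)}{\Gamma(a)}\prod_{k=1}^{n}\frac{\Gamma(c_k)}{\Gamma(c_k-b_k)}.$$
   Context: $F_A^{(n)}$ is Lauricella's hypergeometric function $F_A^{(n)}[a,b_1,\dots,b_n;c_1,\dots,c_n;y_1,\dots,y_n]=\sum_{m_1,\dots,m_n=0}^\infty\frac{(a)_{m_1+\dots+m_n}(b_1)_{m_1}\cdots(b_n)_{m_n}}{(c_1)_{m_1}\cdots(c_n)_{m_n}}\frac{y_1^{m_1}}{m_1!}\cdots\frac{y_n^{m_n}}{m_n!}$ (with $c_k\ne0,-1,-2,\dots$), understood for the arguments in question via its analytic continuation; $(\lambda)_p$ is the Pochhammer symbol. *)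

theory Defs
  imports "HOL-Complex_Analysis.Complex_Analysis"
begin

text \<open>Lauricella's F_A as a power series, indexed by a finite type 'n
  (the index set {1..n}); multi-indices are all functions m :: 'n \<Rightarrow> nat.\<close>

definition FA_term :: "complex \<Rightarrow> complex^'n::finite \<Rightarrow> complex^'n \<Rightarrow> complex^'n \<Rightarrow> ('n \<Rightarrow> nat) \<Rightarrow> complex" where
  "FA_term a b c y m =
     pochhammer a (\<Sum>k\<in>UNIV. m k) *
     (\<Prod>k\<in>UNIV. pochhammer (b$k) (m k) / pochhammer (c$k) (m k) * (y$k) ^ (m k) / fact (m k))"

definition FA_series :: "complex \<Rightarrow> complex^'n::finite \<Rightarrow> complex^'n \<Rightarrow> complex^'n \<Rightarrow> complex" where
  "FA_series a b c y = (\<Sum>\<^sub>\<infinity>m\<in>UNIV. FA_term a b c y m)"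

text \<open>Analytic continuation of F_A to the point y, taken along the complex line
  z \<mapsto> z*y through the origin: the value at z = 1 of the (unique, by the identity
  theorem) holomorphic function on a connected open set containing the segment [0,1]
  which agrees with the series z \<mapsto> F_A(z y) near z = 0.\<close>

definition LauricellaFA :: "complex \<Rightarrow> complex^'n::finite \<Rightarrow> complex^'n \<Rightarrow> complex^'n \<Rightarrow> complex" where
  "LauricellaFA a b c y =
     (THE w. \<exists>g S e. open S \<and> connected S \<and> closed_segment 0 1 \<subseteq> S \<and>
        g holomorphic_on S \<and> e > 0 \<and> ball 0 e \<subseteq> S \<and>
        (\<forall>z\<in>ball 0 e. g z = FA_series a b c (\<chi> k. z * y$k)) \<and> w = g 1)"

end

theory Submission
  imports Defs "HOL-Real_Asymp.Real_Asymp"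
begin

text \<open>
  Put \<open>x\<^sub>k = 1 - 1/y\<^sub>k \<le> 0\<close> and let \<open>M(b; c; w)\<close> be Kummer's function, written as Euler's
  integral over \<open>(0, 1)\<close>. Integrating the product of the Kummer series termwise gives, near \<open>x = 0\<close>,
  \<open>F\<^sub>A(a; b; c; x) = \<Gamma>(a)\<^sup>-\<^sup>1 \<integral>\<^sub>0\<^sup>\<infinity> s^(a-1) e^(-s) \<Prod>\<^sub>k M(b\<^sub>k; c\<^sub>k; x\<^sub>k s) ds\<close>.
  Since \<open>|M(b; c; w)| \<le> C e^(max 0 (Re w))\<close>, the integral with \<open>x\<close> replaced by \<open>z x\<close> is
  holomorphic on a half-plane \<open>Re z > -\<eta>\<close> containing \<open>[0, 1]\<close>, so its value at \<open>z = 1\<close> is the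
  analytic continuation. Splitting Euler's integral at \<open>t = 1/2\<close> and substituting \<open>t = y u\<close> in
  the lower half shows \<open>y^(-b) M(b; c; (1 - 1/y) s) \<rightarrow> \<Gamma>(c) / \<Gamma>(c - b) s^(-b)\<close> as \<open>y \<rightarrow> 0+\<close>, with
  a bound \<open>K s^(-Re b)\<close> uniform in \<open>y \<in> (0, 1/2]\<close>. As \<open>Re a > Re (\<Sum>\<^sub>k b\<^sub>k)\<close>, dominated
  convergence applies, and the limit is \<open>\<Gamma>(a)\<^sup>-\<^sup>1 \<integral>\<^sub>0\<^sup>\<infinity> s^(a - \<Sum>\<^sub>k b\<^sub>k - 1) e^(-s) ds \<Prod>\<^sub>k \<Gamma>(c\<^sub>k) / \<Gamma>(c\<^sub>k - b\<^sub>k)\<close>.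
\<close>

section \<open>Parameter-dependent integrals\<close>

lemma set_integral_dominated_convergence_at_within:
  fixes s :: "'a::first_countable_topology \<Rightarrow> real \<Rightarrow> 'b::{banach,second_countable_topology}"
  assumes meas: "\<And>z. z \<in> T \<Longrightarrow> set_borel_measurable lborel A (s z)"
    and w: "set_integrable lborel A w"
    and bound: "\<And>z t. z \<in> T \<Longrightarrow> t \<in> A \<Longrightarrow> norm (s z t) \<le> w t"
    and lim: "\<And>t. t \<in> A \<Longrightarrow> ((\<lambda>z. s z t) \<longlongrightarrow> f t) (at x within T)"
  shows "((\<lambda>z. LINT t:A|lborel. s z t) \<longlongrightarrow> (LINT t:A|lborel. f t)) (at x within T)"
  unfolding tendsto_at_iff_sequentially
proof (intro allI impI)
  fix X assume X: "\<forall>i. X i \<in> T - {x}" and Xx: "X \<longlonglongrightarrow> x"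
  have limX: "(\<lambda>i. s (X i) t) \<longlonglongrightarrow> f t" if "t \<in> A" for t
    using lim[OF that] X Xx unfolding tendsto_at_iff_sequentially o_def by blast
  have limI: "(\<lambda>i. indicator A t *\<^sub>R s (X i) t) \<longlonglongrightarrow> indicator A t *\<^sub>R f t" for t
    by (cases "t \<in> A") (auto simp: limX)
  have measI: "(\<lambda>t. indicator A t *\<^sub>R s (X i) t) \<in> borel_measurable lborel" for i
    using meas[of "X i"] X unfolding set_borel_measurable_def by auto
  have "(\<lambda>i. integral\<^sup>L lborel (\<lambda>t. indicator A t *\<^sub>R s (X i) t)) \<longlonglongrightarrow>
        integral\<^sup>L lborel (\<lambda>t. indicator A t *\<^sub>R f t)"
  proof (rule integral_dominated_convergence[OF borel_measurable_LIMSEQ_metric[OF measI limI] measI])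
    show "integrable lborel (\<lambda>t. indicator A t *\<^sub>R w t)"
      using w unfolding set_integrable_def .
    show "AE t in lborel. norm (indicator A t *\<^sub>R s (X i) t) \<le> indicator A t *\<^sub>R w t" for i
      using bound[of "X i"] X by (auto simp: indicator_def)
  qed (use limI in auto)
  then show "((\<lambda>z. LINT t:A|lborel. s z t) \<circ> X) \<longlonglongrightarrow> (LINT t:A|lborel. f t)"
    by (simp add: set_lebesgue_integral_def o_def)
qed

lemma norm_difference_quotient_le:
  assumes hol: "f holomorphic_on cball z0 (2 * r)"
    and bound: "\<And>z. z \<in> cball z0 (2 * r) \<Longrightarrow> norm (f z) \<le> M" and z: "z \<in> ball z0 r"
  shows "norm ((f z - f z0) / (z - z0)) \<le> M / r"
proof (cases "z = z0")
  case True
  have "r > 0" using z zero_le_dist[of z0 z] unfolding mem_ball by linarith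
  then have "norm (f z0) \<le> M" using bound[of z0] by simp
  then have "M \<ge> 0" by (rule order_trans[OF norm_ge_zero])
  with \<open>r > 0\<close> show ?thesis using True by simp
next
  case False
  have r: "r > 0" using z zero_le_dist[of z0 z] unfolding mem_ball by linarith
  have "norm (f z - f z0) \<le> M / r * norm (z - z0)"
  proof (rule field_differentiable_bound[of "ball z0 r" f "deriv f"])
    fix w assume w: "w \<in> ball z0 r"
    have ball: "ball w r \<subseteq> ball z0 (2 * r)" and cball: "cball w r \<subseteq> cball z0 (2 * r)"
      using w r by (simp_all add: ball_subset_ball_iff cball_subset_cball_iff dist_commute)
    have hol_ball: "f holomorphic_on ball z0 (2 * r)"
      using hol ball_subset_cball by (rule holomorphic_on_subset)
    moreover have "w \<in> ball z0 (2 * r)" using w r by auto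
    ultimately show "(f has_field_derivative deriv f w) (at w within ball z0 r)"
      by (intro holomorphic_derivI) auto
    have "norm ((deriv ^^ 1) f w) \<le> fact 1 * M / r ^ 1"
      using hol_ball hol ball cball r bound
      by (intro Cauchy_inequality)
         (auto intro: holomorphic_on_subset continuous_on_subset holomorphic_on_imp_continuous_on simp: dist_norm)
    then show "norm (deriv f w) \<le> M / r" by simp
  qed (use z r in auto)
  with False show ?thesis by (simp add: norm_divide divide_le_eq)
qed

lemma has_field_derivative_set_integral:
  fixes f :: "complex \<Rightarrow> real \<Rightarrow> complex"
  assumes r: "r > 0" "cball z0 (2 * r) \<subseteq> S" and S: "open S"
    and hol: "\<And>t. t \<in> A \<Longrightarrow> (\<lambda>z. f z t) holomorphic_on S"
    and meas: "\<And>z. z \<in> S \<Longrightarrow> set_borel_measurable lborel A (f z)"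
    and bound: "\<And>z t. z \<in> S \<Longrightarrow> t \<in> A \<Longrightarrow> norm (f z t) \<le> h t"
    and h: "set_integrable lborel A h"
  shows "((\<lambda>z. LINT t:A|lborel. f z t) has_field_derivative
           (LINT t:A|lborel. deriv (\<lambda>z. f z t) z0)) (at z0)"
proof -
  define D where "D z t = (f z t - f z0 t) / (z - z0)" for z t
  have z0: "z0 \<in> S" and ball: "ball z0 r \<subseteq> S" using r by auto
  have fint: "set_integrable lborel A (f z)" if "z \<in> S" for z
    by (rule set_integrable_bound[OF h meas[OF that]]) (use bound[OF that] bound[OF z0] in fastforce)
  have D_bound: "norm (D z t) \<le> h t / r" if "z \<in> ball z0 r" "t \<in> A" for z t
    unfolding D_def using that hol r bound
    by (intro norm_difference_quotient_le) (auto intro: holomorphic_on_subset)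
  have D_meas: "set_borel_measurable lborel A (D z)" if "z \<in> ball z0 r" for z
  proof -
    have "(\<lambda>t. (indicator A t *\<^sub>R f z t - indicator A t *\<^sub>R f z0 t) / (z - z0)) \<in> borel_measurable lborel"
      using meas that ball z0 unfolding set_borel_measurable_def by (simp add: subset_iff)
    also have "(\<lambda>t. (indicator A t *\<^sub>R f z t - indicator A t *\<^sub>R f z0 t) / (z - z0)) = (\<lambda>t. indicator A t *\<^sub>R D z t)"
      by (auto simp: D_def indicator_def fun_eq_iff)
    finally show ?thesis unfolding set_borel_measurable_def .
  qed
  have D_lim: "((\<lambda>z. D z t) \<longlongrightarrow> deriv (\<lambda>z. f z t) z0) (at z0 within ball z0 r)" if t: "t \<in> A" for t
    using holomorphic_derivI[OF hol[OF t] S z0] unfolding has_field_derivative_iff D_def .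
  have lim: "((\<lambda>z. LINT t:A|lborel. D z t) \<longlongrightarrow> (LINT t:A|lborel. deriv (\<lambda>z. f z t) z0)) (at z0 within ball z0 r)"
    using h D_meas D_bound D_lim
    by (intro set_integral_dominated_convergence_at_within[where w = "\<lambda>t. h t / r"]) auto
  have quotient: "(LINT t:A|lborel. D z t) =
      ((LINT t:A|lborel. f z t) - (LINT t:A|lborel. f z0 t)) / (z - z0)" if "z \<in> ball z0 r" for z
    using that ball fint z0 unfolding D_def by (simp add: set_integral_diff subset_iff)
  have "((\<lambda>z. LINT t:A|lborel. f z t) has_field_derivative
           (LINT t:A|lborel. deriv (\<lambda>z. f z t) z0)) (at z0 within ball z0 r)"
    unfolding has_field_derivative_iff
    by (rule Lim_transform_within_open[OF lim, where s = "ball z0 r"]) (use r quotient in simp_all)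
  then show ?thesis using r by (subst (asm) at_within_open) auto
qed

lemma holomorphic_on_set_integral:
  fixes f :: "complex \<Rightarrow> real \<Rightarrow> complex"
  assumes S: "open S"
    and hol: "\<And>t. t \<in> A \<Longrightarrow> (\<lambda>z. f z t) holomorphic_on S"
    and meas: "\<And>z. z \<in> S \<Longrightarrow> set_borel_measurable lborel A (f z)"
    and bound: "\<And>z t. z \<in> S \<Longrightarrow> t \<in> A \<Longrightarrow> norm (f z t) \<le> h t"
    and h: "set_integrable lborel A h"
  shows "(\<lambda>z. LINT t:A|lborel. f z t) holomorphic_on S"
  unfolding holomorphic_on_open[OF S]
proof
  fix z0 assume "z0 \<in> S"
  then obtain e where "e > 0" "cball z0 e \<subseteq> S" using open_contains_cball S by blast
  then have "e / 2 > 0" "cball z0 (2 * (e / 2)) \<subseteq> S" by auto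
  from has_field_derivative_set_integral[OF this S hol meas bound h]
  show "\<exists>f'. ((\<lambda>z. LINT t:A|lborel. f z t) has_field_derivative f') (at z0)" by blast
qed

lemma set_integral_has_sum:
  fixes f :: "'i::countable \<Rightarrow> real \<Rightarrow> complex"
  assumes inf: "infinite (UNIV :: 'i set)"
    and int: "\<And>i. set_integrable lborel A (f i)"
    and summ: "(\<lambda>i. LINT t:A|lborel. norm (f i t)) summable_on UNIV"
    and ptw: "\<And>t. t \<in> A \<Longrightarrow> ((\<lambda>i. f i t) has_sum F t) UNIV"
  shows "((\<lambda>i. LINT t:A|lborel. f i t) has_sum (LINT t:A|lborel. F t)) UNIV"
proof -
  obtain e :: "nat \<Rightarrow> 'i" where e: "bij_betw e UNIV UNIV"
    by (rule countable_infiniteE'[OF countableI_type inf])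
  define g where "g n t = indicator A t *\<^sub>R f (e n) t" for n t
  have gi: "integrable lborel (g n)" for n
    using int[of "e n"] unfolding set_integrable_def g_def .
  have ptw_n: "((\<lambda>n. f (e n) t) has_sum F t) UNIV" if "t \<in> A" for t
    using ptw[OF that] has_sum_reindex_bij_betw[OF e, of "\<lambda>i. f i t"] by simp
  have sum_g: "summable (\<lambda>n. norm (g n t))" for t
  proof (cases "t \<in> A")
    case True
    have "(\<lambda>n. f (e n) t) summable_on UNIV" using ptw_n[OF True] by (auto simp: summable_on_def)
    then have "(\<lambda>n. norm (f (e n) t)) summable_on UNIV"
      using summable_on_iff_abs_summable_on_complex[of "\<lambda>n. f (e n) t" UNIV] by simp
    then show ?thesis using True by (auto simp: g_def dest: summable_on_imp_summable)
  qed (simp add: g_def)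
  have normg: "(\<integral>t. norm (g n t) \<partial>lborel) = (LINT t:A|lborel. norm (f (e n) t))" for n
    unfolding set_lebesgue_integral_def g_def
    by (intro Bochner_Integration.integral_cong) (auto simp: indicator_def)
  have summ_n: "summable (\<lambda>n. \<integral>t. norm (g n t) \<partial>lborel)"
    using summ summable_on_reindex_bij_betw[OF e, of "\<lambda>i. LINT t:A|lborel. norm (f i t)"]
    by (auto simp: normg dest: summable_on_imp_summable)
  have gsum: "(\<Sum>n. g n t) = indicator A t *\<^sub>R F t" for t
    using has_sum_imp_sums[OF ptw_n[of t]] by (cases "t \<in> A") (auto simp: g_def sums_iff)
  have "(\<lambda>n. integral\<^sup>L lborel (g n)) sums (\<integral>t. (\<Sum>n. g n t) \<partial>lborel)"
    using sums_integral[OF gi _ summ_n] sum_g by simp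
  then have sums: "(\<lambda>n. LINT t:A|lborel. f (e n) t) sums (LINT t:A|lborel. F t)"
    unfolding gsum by (simp add: set_lebesgue_integral_def g_def[abs_def])
  have "summable (\<lambda>n. norm (LINT t:A|lborel. f (e n) t))"
  proof (rule summable_comparison_test[OF _ summ_n], intro exI allI impI)
    fix n :: nat
    show "norm (norm (LINT t:A|lborel. f (e n) t)) \<le> (\<integral>t. norm (g n t) \<partial>lborel)"
      using integral_norm_bound[of lborel "g n"] by (simp add: set_lebesgue_integral_def g_def[abs_def])
  qed
  from norm_summable_imp_has_sum[OF this sums] show ?thesis
    using has_sum_reindex_bij_betw[OF e, of "\<lambda>i. LINT t:A|lborel. f i t"] by simp
qed

lemma set_integrable_sum:
  fixes f :: "'i \<Rightarrow> real \<Rightarrow> 'b::{banach,second_countable_topology}"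
  assumes "\<And>i. i \<in> F \<Longrightarrow> set_integrable lborel A (f i)"
  shows "set_integrable lborel A (\<lambda>x. \<Sum>i\<in>F. f i x)"
  using assms unfolding set_integrable_def by (simp add: scaleR_sum_right)

lemma set_integral_sum:
  fixes f :: "'i \<Rightarrow> real \<Rightarrow> 'b::{banach,second_countable_topology}"
  assumes "\<And>i. i \<in> F \<Longrightarrow> set_integrable lborel A (f i)"
  shows "(LINT x:A|lborel. (\<Sum>i\<in>F. f i x)) = (\<Sum>i\<in>F. LINT x:A|lborel. f i x)"
  using assms unfolding set_integrable_def set_lebesgue_integral_def
  by (simp add: scaleR_sum_right Bochner_Integration.integral_sum)

section \<open>Euler's Beta and Gamma integrals\<close>

lemma Re_pos_not_nonpos_Ints: "Re z > 0 \<Longrightarrow> z \<notin> \<int>\<^sub>\<le>\<^sub>0"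
  by (auto elim!: nonpos_Ints_cases)

lemma holomorphic_on_right_half_plane:
  assumes "\<And>\<delta>. \<delta> > 0 \<Longrightarrow> f holomorphic_on {z. Re z > \<delta>}"
  shows "f holomorphic_on {z. Re z > 0}"
proof -
  have "\<exists>f'. (f has_field_derivative f') (at z)" if "Re z > 0" for z
  proof -
    have "f holomorphic_on {w. Re w > Re z / 2}" using that by (intro assms) simp
    then show ?thesis
      using that holomorphic_on_open[OF open_halfspace_Re_gt, of f "Re z / 2"] by auto
  qed
  then show ?thesis
    using holomorphic_on_open[OF open_halfspace_Re_gt, of f 0] by auto
qed

lemma right_half_plane_identity:
  assumes f: "f holomorphic_on {z. Re z > 0}" and g: "g holomorphic_on {z. Re z > 0}"
    and eq: "\<And>x. x > 0 \<Longrightarrow> f (of_real x) = g (of_real x)" and z: "Re z > 0"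
  shows "f z = g z"
proof -
  have limpt: "1 islimpt {z. z \<in> \<real> \<and> Re z > 0}"
    unfolding islimpt_approachable
  proof (intro allI impI)
    fix e :: real assume "e > 0"
    then show "\<exists>x\<in>{z. z \<in> \<real> \<and> Re z > 0}. x \<noteq> 1 \<and> dist x 1 < e"
      by (intro bexI[of _ "of_real (1 + e / 2)"]) (auto simp: dist_norm)
  qed
  have "f z - g z = 0"
  proof (rule analytic_continuation[where f = "\<lambda>z. f z - g z" and S = "{z. Re z > 0}"])
    show "(\<lambda>z. f z - g z) holomorphic_on {z. Re z > 0}" using f g by (intro holomorphic_intros)
    show "connected {z::complex. Re z > 0}" by (rule convex_connected[OF convex_halfspace_Re_gt])
    show "f x - g x = 0" if "x \<in> {z. z \<in> \<real> \<and> Re z > 0}" for x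
      using that eq by (auto elim!: Reals_cases)
  qed (use z limpt in \<open>auto simp: open_halfspace_Re_gt\<close>)
  then show ?thesis by simp
qed

definition beta_kernel :: "complex \<Rightarrow> complex \<Rightarrow> real \<Rightarrow> complex" where
  "beta_kernel p q t = of_real t powr (p - 1) * of_real (1 - t) powr (q - 1)"

lemma beta_kernel_measurable [measurable]: "beta_kernel p q \<in> borel_measurable borel"
  unfolding beta_kernel_def by measurable

lemma norm_beta_kernel:
  "t \<in> {0<..<1} \<Longrightarrow> norm (beta_kernel p q t) = t powr (Re p - 1) * (1 - t) powr (Re q - 1)"
  by (simp add: beta_kernel_def norm_mult norm_powr_real_powr)

lemma norm_beta_kernel_le:
  "t \<in> {0<..<1} \<Longrightarrow> Re p \<ge> \<sigma> \<Longrightarrow> Re q \<ge> \<tau> \<Longrightarrow>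
     norm (beta_kernel p q t) \<le> t powr (\<sigma> - 1) * (1 - t) powr (\<tau> - 1)"
  by (auto simp: norm_beta_kernel intro!: mult_mono powr_mono')

lemma set_integrable_real_beta_kernel:
  "a > 0 \<Longrightarrow> b > (0::real) \<Longrightarrow>
     set_integrable lborel {0<..<1} (\<lambda>t. t powr (a - 1) * (1 - t) powr (b - 1))"
  by (rule set_integrable_subset[OF integrable_Beta]) auto

lemma set_integral_real_beta_kernel:
  assumes "a > 0" "b > (0::real)"
  shows "(LINT t:{0<..<1}|lborel. t powr (a - 1) * (1 - t) powr (b - 1)) = Beta a b"
proof -
  have "(LINT t:{0<..<1}|lborel. t powr (a - 1) * (1 - t) powr (b - 1)) =
        integral {0<..<1} (\<lambda>t. t powr (a - 1) * (1 - t) powr (b - 1))"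
    by (rule set_borel_integral_eq_integral(2)[OF set_integrable_real_beta_kernel[OF assms]])
  also have "\<dots> = Beta a b"
    using has_integral_Beta_real[OF assms] by (simp add: has_integral_Icc_iff_Ioo integral_unique)
  finally show ?thesis .
qed

lemma set_integrable_beta_kernel:
  assumes "Re p > 0" "Re q > 0"
  shows "set_integrable lborel {0<..<1} (beta_kernel p q)"
  by (rule set_integrable_bound[OF set_integrable_real_beta_kernel[OF assms]])
     (auto simp: norm_beta_kernel set_borel_measurable_def)

lemma holomorphic_beta_integral_left:
  assumes "Re q > 0"
  shows "(\<lambda>p. LINT t:{0<..<1}|lborel. beta_kernel p q t) holomorphic_on {p. Re p > 0}"
proof (rule holomorphic_on_right_half_plane)
  fix \<delta> :: real assume "\<delta> > 0"
  show "(\<lambda>p. LINT t:{0<..<1}|lborel. beta_kernel p q t) holomorphic_on {p. Re p > \<delta>}"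
  proof (rule holomorphic_on_set_integral[where h = "\<lambda>t. t powr (\<delta> - 1) * (1 - t) powr (Re q - 1)"])
    show "(\<lambda>p. beta_kernel p q t) holomorphic_on {p. Re p > \<delta>}" for t
      unfolding beta_kernel_def by (intro holomorphic_intros)
    show "norm (beta_kernel p q t) \<le> t powr (\<delta> - 1) * (1 - t) powr (Re q - 1)" if "p \<in> {p. Re p > \<delta>}" "t \<in> {0<..<1}" for p t
      using that by (intro norm_beta_kernel_le) auto
  qed (use \<open>\<delta> > 0\<close> assms in \<open>auto simp: set_borel_measurable_def open_halfspace_Re_gt
         intro: set_integrable_real_beta_kernel\<close>)
qed

lemma holomorphic_beta_integral_right:
  assumes "Re p > 0"
  shows "(\<lambda>q. LINT t:{0<..<1}|lborel. beta_kernel p q t) holomorphic_on {q. Re q > 0}"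
proof (rule holomorphic_on_right_half_plane)
  fix \<delta> :: real assume "\<delta> > 0"
  show "(\<lambda>q. LINT t:{0<..<1}|lborel. beta_kernel p q t) holomorphic_on {q. Re q > \<delta>}"
  proof (rule holomorphic_on_set_integral[where h = "\<lambda>t. t powr (Re p - 1) * (1 - t) powr (\<delta> - 1)"])
    show "(\<lambda>q. beta_kernel p q t) holomorphic_on {q. Re q > \<delta>}" for t
      unfolding beta_kernel_def by (intro holomorphic_intros)
    show "norm (beta_kernel p q t) \<le> t powr (Re p - 1) * (1 - t) powr (\<delta> - 1)" if "q \<in> {q. Re q > \<delta>}" "t \<in> {0<..<1}" for q t
      using that by (intro norm_beta_kernel_le) auto
  qed (use \<open>\<delta> > 0\<close> assms in \<open>auto simp: set_borel_measurable_def open_halfspace_Re_gt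
         intro: set_integrable_real_beta_kernel\<close>)
qed

text \<open>For real parameters this is the library's real Beta integral; both sides are holomorphic
  in each parameter, so the identity theorem extends it one parameter at a time.\<close>

lemma set_integral_beta_kernel:
  assumes p: "Re p > 0" and q: "Re q > 0"
  shows "(LINT t:{0<..<1}|lborel. beta_kernel p q t) = Beta p q"
proof -
  have real: "(LINT t:{0<..<1}|lborel. beta_kernel (of_real a) (of_real b) t) = Beta (of_real a) (of_real b)"
    if "a > 0" "b > 0" for a b
  proof -
    have "(LINT t:{0<..<1}|lborel. beta_kernel (of_real a) (of_real b) t) =
          (LINT t:{0<..<1}|lborel. complex_of_real (t powr (a - 1) * (1 - t) powr (b - 1)))"
      by (intro set_lebesgue_integral_cong) (auto simp: beta_kernel_def powr_of_real[symmetric])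
    also have "\<dots> = Beta (of_real a) (of_real b)"
      using that by (subst set_integral_complex_of_real) (simp add: set_integral_real_beta_kernel Beta_complex_of_real)
    finally show ?thesis .
  qed
  have left: "(LINT t:{0<..<1}|lborel. beta_kernel p' (of_real b) t) = Beta p' (of_real b)"
    if b: "b > 0" and p': "Re p' > 0" for b p'
  proof (rule right_half_plane_identity[OF holomorphic_beta_integral_left _ _ p'])
    show "(\<lambda>p. Beta p (of_real b)) holomorphic_on {p. Re p > 0}"
      using b by (intro holomorphic_Beta holomorphic_intros) (auto intro!: Re_pos_not_nonpos_Ints)
  qed (use real b in simp_all)
  show ?thesis
  proof (rule right_half_plane_identity[OF holomorphic_beta_integral_right _ _ q])
    show "(\<lambda>q. Beta p q) holomorphic_on {q. Re q > 0}"
      using p by (intro holomorphic_Beta holomorphic_intros) (auto intro!: Re_pos_not_nonpos_Ints)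
  qed (use left p in simp_all)
qed

lemma norm_Beta_le:
  assumes p: "Re p > 0" and q: "Re q > 0"
  shows "norm (Beta p q) \<le> Beta (Re p) (Re q)"
proof -
  have "norm (Beta p q) \<le> (LINT t:{0<..<1}|lborel. norm (beta_kernel p q t))"
    unfolding set_integral_beta_kernel[OF p q, symmetric]
    by (rule set_integral_norm_bound[OF set_integrable_beta_kernel[OF p q]])
  also have "\<dots> = (LINT t:{0<..<1}|lborel. t powr (Re p - 1) * (1 - t) powr (Re q - 1))"
    by (intro set_lebesgue_integral_cong) (auto simp: norm_beta_kernel)
  also have "\<dots> = Beta (Re p) (Re q)"
    using p q by (rule set_integral_real_beta_kernel)
  finally show ?thesis .
qed

lemma set_integral_power_mult_beta_kernel:
  assumes b: "Re b > 0" and q: "Re q > 0"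
  shows "set_integrable lborel {0<..<1} (\<lambda>t. of_real t ^ j * beta_kernel b q t)"
    and "(LINT t:{0<..<1}|lborel. of_real t ^ j * beta_kernel b q t) = Beta (b + of_nat j) q"
proof -
  have bj: "Re (b + of_nat j) > 0" using b by simp
  have eq: "of_real t ^ j * beta_kernel b q t = beta_kernel (b + of_nat j) q t" if t: "t \<in> {0<..<1}" for t
  proof -
    have "(of_real t powr of_nat j :: complex) = of_real t ^ j" using t by (simp add: powr_nat)
    moreover have "of_real t powr (b + of_nat j - 1) = of_real t powr (b - 1) * (of_real t powr of_nat j :: complex)"
      by (subst powr_add[symmetric]) (simp add: algebra_simps)
    ultimately show ?thesis by (simp add: beta_kernel_def mult_ac)
  qed
  have "set_integrable lborel {0<..<1} (beta_kernel (b + of_nat j) q)"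
    by (rule set_integrable_beta_kernel[OF bj q])
  also have "?this \<longleftrightarrow> set_integrable lborel {0<..<1} (\<lambda>t. of_real t ^ j * beta_kernel b q t)"
    by (intro set_integrable_cong) (auto simp: eq)
  finally show "set_integrable lborel {0<..<1} (\<lambda>t. of_real t ^ j * beta_kernel b q t)" .
  have "(LINT t:{0<..<1}|lborel. of_real t ^ j * beta_kernel b q t) = (LINT t:{0<..<1}|lborel. beta_kernel (b + of_nat j) q t)"
    by (intro set_lebesgue_integral_cong) (auto simp: eq)
  also have "\<dots> = Beta (b + of_nat j) q" by (rule set_integral_beta_kernel[OF bj q])
  finally show "(LINT t:{0<..<1}|lborel. of_real t ^ j * beta_kernel b q t) = Beta (b + of_nat j) q" .
qed

lemma Beta_add_of_nat:
  assumes "Re b > 0" "Re q > 0"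
  shows "Beta (b + of_nat j) q = Beta b q * pochhammer b j / pochhammer (b + q) j"
proof -
  have nz: "Gamma b \<noteq> 0" "Gamma (b + q) \<noteq> 0" "Gamma (b + q + of_nat j) \<noteq> 0"
    using assms by (auto intro!: Gamma_nonzero Re_pos_not_nonpos_Ints)
  have "pochhammer b j = Gamma (b + of_nat j) / Gamma b"
    and "pochhammer (b + q) j = Gamma (b + q + of_nat j) / Gamma (b + q)"
    using assms by (auto intro!: pochhammer_Gamma Re_pos_not_nonpos_Ints)
  moreover have "b + of_nat j + q = b + q + of_nat j" by simp
  ultimately show ?thesis using nz by (simp add: Beta_def field_simps)
qed

lemma Beta_nonzero: "Re b > 0 \<Longrightarrow> Re q > 0 \<Longrightarrow> Beta b q \<noteq> 0"
  by (simp add: Beta_def Gamma_nonzero Re_pos_not_nonpos_Ints)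

lemma Gamma_div_Beta:
  assumes "Re b > 0" "Re c > Re b"
  shows "Gamma b / Beta b (c - b) = Gamma c / Gamma (c - b)"
proof -
  have "Gamma b \<noteq> 0" "Gamma (c - b) \<noteq> 0"
    using assms by (auto intro!: Gamma_nonzero Re_pos_not_nonpos_Ints)
  then show ?thesis by (simp add: Beta_def field_simps)
qed

lemma set_integrable_Gamma_kernel:
  assumes "Re b > 0"
  shows "set_integrable lborel {0<..} (\<lambda>t. of_real t powr (b - 1) / of_real (exp t) :: complex)"
  using absolutely_integrable_Gamma_integral'[OF assms] unfolding set_integrable_def
  by (subst (asm) integrable_completion) measurable

lemma set_integral_Gamma_kernel:
  assumes "Re b > 0"
  shows "(LINT t:{0<..}|lborel. of_real t powr (b - 1) / of_real (exp t) :: complex) = Gamma b"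
  using Gamma_integral_complex'[OF assms]
  by (simp add: set_borel_integral_eq_integral(2)[OF set_integrable_Gamma_kernel[OF assms]] integral_unique)

lemma set_integral_scaled_Gamma_kernel:
  assumes b: "Re b > 0" and l: "l > (0::real)"
  shows "set_integrable lborel {0<..} (\<lambda>u. of_real u powr (b - 1) / of_real (exp (l * u)) :: complex)"
    and "(LINT u:{0<..}|lborel. of_real u powr (b - 1) / of_real (exp (l * u)) :: complex) =
           Gamma b / of_real l powr b"
proof -
  define G where "G t = indicator {0<..} t *\<^sub>R (of_real t powr (b - 1) / of_real (exp t) :: complex)" for t
  have G_scaled: "G (0 + l * u) = of_real l powr (b - 1) *
      (indicator {0<..} u *\<^sub>R (of_real u powr (b - 1) / of_real (exp (l * u))))" for u
  proof (cases "u > 0")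
    case True
    then have "(of_real (l * u) :: complex) powr (b - 1) = of_real l powr (b - 1) * of_real u powr (b - 1)"
      using l by (subst of_real_mult, subst powr_times_real) auto
    then show ?thesis using True l by (simp add: G_def)
  qed (use l in \<open>simp add: G_def zero_less_mult_iff\<close>)
  have lnz: "(of_real l powr (b - 1) :: complex) \<noteq> 0" using l by simp
  have "integrable lborel (\<lambda>u. G (0 + l * u))"
    using set_integrable_Gamma_kernel[OF b] l
    by (intro lborel_integrable_real_affine) (auto simp: G_def set_integrable_def)
  then have "integrable lborel (\<lambda>u. inverse (of_real l powr (b - 1)) * G (0 + l * u))"
    by (rule Bochner_Integration.integrable_mult_right)
  also have "(\<lambda>u. inverse (of_real l powr (b - 1)) * G (0 + l * u)) =
      (\<lambda>u. indicator {0<..} u *\<^sub>R (of_real u powr (b - 1) / of_real (exp (l * u)) :: complex))"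
    unfolding G_scaled using lnz by (simp add: fun_eq_iff)
  finally show "set_integrable lborel {0<..} (\<lambda>u. of_real u powr (b - 1) / of_real (exp (l * u)) :: complex)"
    unfolding set_integrable_def .
  have "Gamma b = \<bar>l\<bar> *\<^sub>R (\<integral>u. G (0 + l * u) \<partial>lborel)"
    using set_integral_Gamma_kernel[OF b] lborel_integral_real_affine[of l G 0] l
    by (simp add: G_def set_lebesgue_integral_def)
  also have "\<dots> = of_real l * of_real l powr (b - 1) * (LINT u:{0<..}|lborel. of_real u powr (b - 1) / of_real (exp (l * u)))"
    unfolding G_scaled set_lebesgue_integral_def integral_mult_right_zero using l by (simp add: scaleR_conv_of_real)
  also have "of_real l * of_real l powr (b - 1) = (of_real l powr b :: complex)"
    using l by (simp add: powr_diff)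
  finally show "(LINT u:{0<..}|lborel. of_real u powr (b - 1) / of_real (exp (l * u)) :: complex) = Gamma b / of_real l powr b"
    using l by (simp add: field_simps)
qed

lemma set_integrable_real_scaled_Gamma_kernel:
  fixes \<beta> l :: real
  assumes "\<beta> > 0" "l > 0"
  shows "set_integrable lborel {0<..} (\<lambda>u. u powr (\<beta> - 1) * exp (- l * u))"
proof -
  have "set_integrable lborel {0<..} (\<lambda>u. norm (of_real u powr (of_real \<beta> - 1) / of_real (exp (l * u)) :: complex))"
    using assms by (intro set_integrable_norm set_integral_scaled_Gamma_kernel(1)) auto
  also have "?this \<longleftrightarrow> ?thesis"
    by (intro set_integrable_cong) (auto simp: norm_divide norm_powr_real_powr exp_minus field_simps)
  finally show ?thesis .
qed

lemma set_integral_real_scaled_Gamma_kernel: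
  fixes \<beta> l :: real
  assumes \<beta>: "\<beta> > 0" and l: "l > 0"
  shows "(LINT u:{0<..}|lborel. u powr (\<beta> - 1) * exp (- l * u)) = Gamma \<beta> / l powr \<beta>"
proof -
  have "complex_of_real (LINT u:{0<..}|lborel. u powr (\<beta> - 1) * exp (- l * u)) =
        (LINT u:{0<..}|lborel. of_real u powr (of_real \<beta> - 1) / of_real (exp (l * u)))"
    unfolding set_integral_complex_of_real[symmetric]
    by (intro set_lebesgue_integral_cong) (auto simp: powr_of_real[symmetric] exp_minus field_simps)
  also have "\<dots> = complex_of_real (Gamma \<beta> / l powr \<beta>)"
    using assms by (simp add: set_integral_scaled_Gamma_kernel(2) Gamma_complex_of_real powr_of_real)
  finally show ?thesis by (subst (asm) of_real_eq_iff)
qed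

section \<open>Kummer's confluent hypergeometric function\<close>

definition kummer_integral :: "complex \<Rightarrow> complex \<Rightarrow> complex \<Rightarrow> complex" where
  "kummer_integral b q w = (LINT t:{0<..<1}|lborel. exp (w * of_real t) * beta_kernel b q t)"

text \<open>Kummer's function \<open>M(b; c; w) = \<^sub>1F\<^sub>1(b; c; w)\<close> in Euler's integral form, which is
  meaningful only for \<open>Re c > Re b > 0\<close>.\<close>

definition kummer_M :: "complex \<Rightarrow> complex \<Rightarrow> complex \<Rightarrow> complex" where
  "kummer_M b c w = kummer_integral b (c - b) w / Beta b (c - b)"

lemma norm_exp_mult_of_real_le:
  assumes "t \<in> {0<..<1}"
  shows "norm (exp (w * of_real t)) \<le> exp (max 0 (Re w))"
proof -
  have "Re w * t \<le> max 0 (Re w)"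
    using assms mult_left_le[of t "Re w"] by (cases "Re w \<ge> 0") (auto simp: mult_nonpos_nonneg)
  then show ?thesis by simp
qed

lemma norm_kummer_integrand_le:
  assumes t: "t \<in> {0<..<1}"
  shows "norm (exp (w * of_real t) * beta_kernel b q t) \<le>
           exp (max 0 (Re w)) * (t powr (Re b - 1) * (1 - t) powr (Re q - 1))"
  unfolding norm_mult norm_beta_kernel[OF t] by (intro mult_right_mono norm_exp_mult_of_real_le t) simp

lemma set_integrable_kummer_integrand:
  assumes "Re b > 0" "Re q > 0"
  shows "set_integrable lborel {0<..<1} (\<lambda>t. exp (w * of_real t) * beta_kernel b q t)"
proof (rule set_integrable_bound[OF set_integrable_mult_right[OF set_integrable_real_beta_kernel[OF assms]]])
  show "set_borel_measurable lborel {0<..<1} (\<lambda>t. exp (w * of_real t) * beta_kernel b q t)"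
    unfolding set_borel_measurable_def by measurable
  show "AE t in lborel. t \<in> {0<..<1} \<longrightarrow> norm (exp (w * of_real t) * beta_kernel b q t)
          \<le> norm (exp (max 0 (Re w)) * (t powr (Re b - 1) * (1 - t) powr (Re q - 1)))"
    using norm_kummer_integrand_le by (intro AE_I2 impI) (simp add: abs_mult)
qed

lemma norm_kummer_integral_le:
  assumes "Re b > 0" "Re q > 0"
  shows "norm (kummer_integral b q w) \<le> exp (max 0 (Re w)) * Beta (Re b) (Re q)"
proof -
  have "norm (kummer_integral b q w) \<le> (LINT t:{0<..<1}|lborel. norm (exp (w * of_real t) * beta_kernel b q t))"
    unfolding kummer_integral_def by (rule set_integral_norm_bound[OF set_integrable_kummer_integrand[OF assms]])
  also have "\<dots> \<le> (LINT t:{0<..<1}|lborel. exp (max 0 (Re w)) * (t powr (Re b - 1) * (1 - t) powr (Re q - 1)))"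
    using set_integrable_norm[OF set_integrable_kummer_integrand[OF assms]] set_integrable_real_beta_kernel[OF assms]
    by (intro set_integral_mono norm_kummer_integrand_le) auto
  also have "\<dots> = exp (max 0 (Re w)) * Beta (Re b) (Re q)"
    using assms by (simp add: set_integral_real_beta_kernel)
  finally show ?thesis .
qed

lemma holomorphic_kummer_integral:
  assumes "Re b > 0" "Re q > 0"
  shows "kummer_integral b q holomorphic_on UNIV"
proof -
  have "kummer_integral b q holomorphic_on ball 0 R" for R
    unfolding kummer_integral_def[abs_def]
  proof (rule holomorphic_on_set_integral[where h = "\<lambda>t. exp R * (t powr (Re b - 1) * (1 - t) powr (Re q - 1))"])
    fix w :: complex and t :: real assume w: "w \<in> ball 0 R" and t: "t \<in> {0<..<1}"
    have "max 0 (Re w) \<le> R" using w abs_Re_le_cmod[of w] by auto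
    then have "norm (exp (w * of_real t)) \<le> exp R"
      using norm_exp_mult_of_real_le[OF t, of w] by (meson exp_le_cancel_iff order_trans)
    then show "norm (exp (w * of_real t) * beta_kernel b q t) \<le> exp R * (t powr (Re b - 1) * (1 - t) powr (Re q - 1))"
      unfolding norm_mult norm_beta_kernel[OF t] by (intro mult_right_mono) auto
  qed (use set_integrable_real_beta_kernel[OF assms] in
        \<open>auto simp: set_borel_measurable_def intro!: holomorphic_intros\<close>)
  moreover have "UNIV = (\<Union>R\<in>UNIV. ball (0::complex) R)"
    by (auto intro: gt_ex)
  ultimately show ?thesis
    using holomorphic_on_UN_open[where I = UNIV and A = "\<lambda>R. ball 0 R" and f = "kummer_integral b q"] by simp
qed

lemma kummer_integral_has_sum:
  assumes b: "Re b > 0" and q: "Re q > 0"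
  shows "((\<lambda>j. w ^ j / fact j * Beta (b + of_nat j) q) has_sum kummer_integral b q w) UNIV"
proof -
  define f where "f j t = w ^ j / fact j * (of_real t ^ j * beta_kernel b q t)" for j t
  have fint: "set_integrable lborel {0<..<1} (f j)" for j
    unfolding f_def by (intro set_integrable_mult_right set_integral_power_mult_beta_kernel(1) b q)
  have fint_eq: "(LINT t:{0<..<1}|lborel. f j t) = w ^ j / fact j * Beta (b + of_nat j) q" for j
    unfolding f_def set_integral_mult_right set_integral_power_mult_beta_kernel(2)[OF b q] ..
  have fnorm: "(LINT t:{0<..<1}|lborel. norm (f j t)) \<le> norm w ^ j / fact j * Beta (Re b) (Re q)" for j
  proof -
    have "(LINT t:{0<..<1}|lborel. norm (f j t)) \<le>
          (LINT t:{0<..<1}|lborel. norm w ^ j / fact j * (t powr (Re b - 1) * (1 - t) powr (Re q - 1)))"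
    proof (rule set_integral_mono)
      fix t :: real assume t: "t \<in> {0<..<1}"
      have "norm w ^ j * t ^ j \<le> norm w ^ j" using t by (intro mult_left_le power_le_one) auto
      then have "norm w ^ j * t ^ j / fact j * (t powr (Re b - 1) * (1 - t) powr (Re q - 1))
            \<le> norm w ^ j / fact j * (t powr (Re b - 1) * (1 - t) powr (Re q - 1))"
        by (intro mult_right_mono divide_right_mono) auto
      then show "norm (f j t) \<le> norm w ^ j / fact j * (t powr (Re b - 1) * (1 - t) powr (Re q - 1))"
        using t by (simp add: f_def norm_mult norm_divide norm_power norm_beta_kernel)
    qed (use set_integrable_norm[OF fint] set_integrable_real_beta_kernel[OF b q] in auto)
    also have "\<dots> = norm w ^ j / fact j * Beta (Re b) (Re q)"
      using b q by (simp add: set_integral_real_beta_kernel)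
    finally show ?thesis .
  qed
  have summ: "(\<lambda>j. LINT t:{0<..<1}|lborel. norm (f j t)) summable_on UNIV"
  proof -
    have nonneg: "(LINT t:{0<..<1}|lborel. norm (f j t)) \<ge> 0" for j
      unfolding set_lebesgue_integral_def by (intro Bochner_Integration.integral_nonneg) auto
    have "summable (\<lambda>j. LINT t:{0<..<1}|lborel. norm (f j t))"
    proof (rule summable_comparison_test[OF _ summable_mult2[OF summable_exp[of "norm w"], of "Beta (Re b) (Re q)"]])
      show "\<exists>N. \<forall>n\<ge>N. norm (LINT t:{0<..<1}|lborel. norm (f n t)) \<le> inverse (fact n) * norm w ^ n * Beta (Re b) (Re q)"
        using fnorm nonneg by (intro exI[of _ 0] allI impI) (simp add: field_simps)
    qed
    then show ?thesis using nonneg by (subst summable_on_UNIV_nonneg_real_iff) auto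
  qed
  have ptw: "((\<lambda>j. f j t) has_sum (exp (w * of_real t) * beta_kernel b q t)) UNIV" for t
  proof (rule norm_summable_imp_has_sum)
    have "(\<lambda>j. (w * of_real t) ^ j /\<^sub>R fact j * beta_kernel b q t) sums (exp (w * of_real t) * beta_kernel b q t)"
      by (intro sums_mult2 exp_converges)
    then show "(\<lambda>j. f j t) sums (exp (w * of_real t) * beta_kernel b q t)"
      by (simp add: f_def scaleR_conv_of_real divide_inverse power_mult_distrib mult_ac)
    show "summable (\<lambda>j. norm (f j t))"
      using summable_mult2[OF summable_norm_exp[of "w * of_real t"], of "norm (beta_kernel b q t)"]
      by (simp add: f_def norm_mult norm_divide norm_power divide_inverse power_mult_distrib mult_ac norm_inverse)
  qed
  show ?thesis
    using set_integral_has_sum[OF infinite_UNIV_nat fint summ ptw]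
    unfolding fint_eq kummer_integral_def .
qed

lemma pochhammer_ratio_eq_Beta_ratio:
  assumes "Re b > 0" "Re c > Re b"
  shows "pochhammer b j / pochhammer c j = Beta (b + of_nat j) (c - b) / Beta b (c - b)"
  using assms Beta_add_of_nat[of b "c - b" j] Beta_nonzero[of b "c - b"] by simp

lemma kummer_M_has_sum:
  assumes "Re b > 0" "Re c > Re b"
  shows "((\<lambda>j. pochhammer b j / pochhammer c j * w ^ j / fact j) has_sum kummer_M b c w) UNIV"
  using has_sum_cmult_left[OF kummer_integral_has_sum[of b "c - b" w], of "1 / Beta b (c - b)"] assms
  by (simp add: kummer_M_def pochhammer_ratio_eq_Beta_ratio mult_ac)

definition kummer_M_bound :: "complex \<Rightarrow> complex \<Rightarrow> real" where
  "kummer_M_bound b c = Beta (Re b) (Re (c - b)) / norm (Beta b (c - b))"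

lemma kummer_M_bound_nonneg: "Re b > 0 \<Longrightarrow> Re c > Re b \<Longrightarrow> kummer_M_bound b c \<ge> 0"
  by (simp add: kummer_M_bound_def Beta_def less_imp_le[OF Gamma_real_pos])

lemma norm_pochhammer_ratio_le:
  assumes "Re b > 0" "Re c > Re b"
  shows "norm (pochhammer b j / pochhammer c j) \<le> kummer_M_bound b c"
proof -
  have "norm (Beta (b + of_nat j) (c - b)) \<le> Beta (Re b + real j) (Re (c - b))"
    using assms norm_Beta_le[of "b + of_nat j" "c - b"] by simp
  also have "\<dots> \<le> Beta (Re b) (Re (c - b))"
    using assms by (intro Beta_real_mono) auto
  finally show ?thesis
    using assms by (simp add: kummer_M_bound_def pochhammer_ratio_eq_Beta_ratio norm_divide divide_right_mono)
qed

lemma norm_kummer_M_le: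
  assumes "Re b > 0" "Re c > Re b"
  shows "norm (kummer_M b c w) \<le> exp (max 0 (Re w)) * kummer_M_bound b c"
  using norm_kummer_integral_le[of b "c - b" w] assms
  by (simp add: kummer_M_def kummer_M_bound_def norm_divide divide_right_mono)

lemma holomorphic_kummer_M:
  assumes "Re b > 0" "Re c > Re b" "g holomorphic_on S"
  shows "(\<lambda>z. kummer_M b c (g z)) holomorphic_on S"
proof -
  have "(kummer_integral b (c - b) \<circ> g) holomorphic_on S"
    using assms holomorphic_kummer_integral[of b "c - b"]
    by (intro holomorphic_on_compose_gen[of g S _ UNIV]) auto
  then show ?thesis
    using Beta_nonzero[of b "c - b"] assms unfolding kummer_M_def o_def by (intro holomorphic_intros) auto
qed

lemma borel_measurable_kummer_M:
  assumes "Re b > 0" "Re c > Re b" "f \<in> borel_measurable M"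
  shows "(\<lambda>x. kummer_M b c (f x)) \<in> borel_measurable M"
proof -
  have "continuous_on UNIV (kummer_M b c)"
    using holomorphic_kummer_M[OF assms(1,2), of "\<lambda>z. z" UNIV] by (simp add: holomorphic_on_imp_continuous_on)
  then show ?thesis by (rule measurable_compose[OF assms(3) borel_measurable_continuous_onI])
qed

section \<open>Asymptotics of Kummer's function\<close>

text \<open>The integrand obtained from the part \<open>t \<in> (0, 1/2]\<close> of
  \<open>kummer_integral b q ((1 - 1/y) s)\<close> by the substitution \<open>t = y u\<close>.\<close>

definition rescaled_kummer_integrand :: "complex \<Rightarrow> complex \<Rightarrow> real \<Rightarrow> real \<Rightarrow> real \<Rightarrow> complex" where
  "rescaled_kummer_integrand b q y s u =
     exp (of_real ((y - 1) * s * u)) * of_real u powr (b - 1) * of_real (1 - y * u) powr (q - 1)"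

lemma rescaled_kummer_integrand_measurable [measurable]:
  "rescaled_kummer_integrand b q y s \<in> borel_measurable borel"
  unfolding rescaled_kummer_integrand_def by measurable

lemma kummer_integral_split:
  assumes "Re b > 0" "Re q > 0"
  shows "kummer_integral b q w =
           (LINT t:{0<..1/2}|lborel. exp (w * of_real t) * beta_kernel b q t) +
           (LINT t:{1/2<..<1}|lborel. exp (w * of_real t) * beta_kernel b q t)"
proof -
  have "{0<..<1} = {0<..1/2} \<union> {1/2<..<(1::real)}" by auto
  then show ?thesis
    unfolding kummer_integral_def
    by (simp only:) (rule set_integral_Un; auto intro: set_integrable_subset[OF set_integrable_kummer_integrand[OF assms]])
qed

lemma lower_kummer_integral_rescaled:
  assumes y: "y > 0"
  shows "of_real y powr (-b) * (LINT t:{0<..1/2}|lborel. exp (of_real ((1 - 1/y) * s) * of_real t) * beta_kernel b q t) =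
         (LINT u:{0<..1/(2*y)}|lborel. rescaled_kummer_integrand b q y s u)"
proof -
  define w where "w = (of_real ((1 - 1/y) * s) :: complex)"
  define I where "I t = indicator {0<..1/2} t *\<^sub>R (exp (w * of_real t) * beta_kernel b q t)" for t
  define J where "J u = indicator {0<..1/(2*y)} u *\<^sub>R rescaled_kummer_integrand b q y s u" for u
  have IJ: "I (0 + y * u) = of_real y powr (b - 1) * J u" for u
  proof (cases "u > 0 \<and> u \<le> 1/(2*y)")
    case True
    then have u: "u > 0" "y * u \<le> 1/2" using y by (auto simp: field_simps)
    have I: "I (0 + y * u) = exp (w * of_real (y * u)) * beta_kernel b q (y * u)"
      using u y by (simp add: I_def indicator_def)
    have J: "J u = rescaled_kummer_integrand b q y s u" using True by (simp add: J_def)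
    have p: "(of_real (y * u) :: complex) powr (b - 1) = of_real y powr (b - 1) * of_real u powr (b - 1)"
      using u y by (subst of_real_mult, subst powr_times_real) auto
    have e: "w * of_real (y * u) = of_real ((y - 1) * s * u)"
      using y by (simp add: w_def field_simps)
    show ?thesis unfolding I J e beta_kernel_def rescaled_kummer_integrand_def p by (simp add: mult_ac)
  next
    case False
    then have "indicator {0<..1/2} (y * u) = (0::real)" "indicator {0<..1/(2*y)} u = (0::real)"
      using y by (auto simp: indicator_def field_simps zero_less_mult_iff)
    then show ?thesis unfolding I_def J_def by simp
  qed
  have "(LINT t:{0<..1/2}|lborel. exp (w * of_real t) * beta_kernel b q t) = integral\<^sup>L lborel I"
    unfolding I_def set_lebesgue_integral_def ..
  also have "\<dots> = \<bar>y\<bar> *\<^sub>R (\<integral>u. I (0 + y * u) \<partial>lborel)"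
    using y by (intro lborel_integral_real_affine) auto
  also have "\<dots> = of_real y powr b * integral\<^sup>L lborel J"
    unfolding IJ integral_mult_right_zero using y by (simp add: scaleR_conv_of_real powr_diff)
  finally have "of_real y powr (-b) * (LINT t:{0<..1/2}|lborel. exp (w * of_real t) * beta_kernel b q t) =
                integral\<^sup>L lborel J"
    using y by (simp add: powr_minus field_simps)
  then show ?thesis unfolding w_def J_def set_lebesgue_integral_def .
qed

lemma norm_rescaled_kummer_integrand_le:
  assumes y: "0 < y" "y \<le> 1/2" and s: "s \<ge> 0" and u: "0 < u" "u \<le> 1/(2*y)"
  shows "norm (rescaled_kummer_integrand b q y s u) \<le>
           max 1 ((1/2) powr (Re q - 1)) * (u powr (Re b - 1) * exp (- (s/2) * u))"
proof -
  have yu: "y * u \<in> {0..1/2}" using u y by (auto simp: field_simps)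
  have "(y - 1) * (s * u) \<le> (-1/2) * (s * u)" using y s u by (intro mult_right_mono) auto
  then have e: "norm (exp (of_real ((y - 1) * s * u)) :: complex) \<le> exp (- (s/2) * u)"
    by (simp add: mult_ac)
  have "(1 - y * u) powr (Re q - 1) \<le> max 1 ((1/2) powr (Re q - 1))"
  proof (cases "Re q - 1 \<ge> 0")
    case True
    then have "(1 - y * u) powr (Re q - 1) \<le> 1 powr (Re q - 1)" using yu by (intro powr_mono2) auto
    then show ?thesis by simp
  next
    case False
    then have "(1 - y * u) powr (Re q - 1) \<le> (1/2) powr (Re q - 1)" using yu by (intro powr_mono2') auto
    then show ?thesis by simp
  qed
  moreover have "norm (of_real (1 - y * u) powr (q - 1) :: complex) = (1 - y * u) powr (Re q - 1)"
    using yu by (simp add: norm_powr_real_powr)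
  moreover have "norm (of_real u powr (b - 1) :: complex) = u powr (Re b - 1)"
    using u by (simp add: norm_powr_real_powr)
  ultimately show ?thesis
    using e unfolding rescaled_kummer_integrand_def norm_mult
    by (simp add: mult_ac mult_mono)
qed

lemma tendsto_rescaled_kummer_integral:
  assumes b: "Re b > 0" and s: "s > 0"
  shows "((\<lambda>y. LINT u:{0<..1/(2*y)}|lborel. rescaled_kummer_integrand b q y s u)
           \<longlongrightarrow> Gamma b / of_real s powr b) (at 0 within {0<..1/2})"
proof -
  define C where "C = max 1 ((1/2) powr (Re q - 1))"
  define g where "g y u = indicator {..1/(2*y)} u *\<^sub>R rescaled_kummer_integrand b q y s u" for y u
  have eq: "(LINT u:{0<..1/(2*y)}|lborel. rescaled_kummer_integrand b q y s u) = (LINT u:{0<..}|lborel. g y u)" for y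
    unfolding set_lebesgue_integral_def g_def
    by (intro Bochner_Integration.integral_cong) (auto simp: indicator_def)
  have lim: "((\<lambda>y. g y u) \<longlongrightarrow> of_real u powr (b - 1) / of_real (exp (s * u))) (at 0 within {0<..1/2})"
    if u: "u > 0" for u
  proof -
    have "eventually (\<lambda>y. rescaled_kummer_integrand b q y s u = g y u) (at 0 within {0<..1/2})"
      unfolding eventually_at
    proof (intro exI[of _ "1/(2*u)"] conjI ballI impI)
      fix y :: real assume "y \<in> {0<..1/2}" "y \<noteq> 0 \<and> dist y 0 < 1/(2*u)"
      then have "u \<le> 1/(2*y)" using u by (auto simp: field_simps dist_norm)
      then show "rescaled_kummer_integrand b q y s u = g y u" by (simp add: g_def)
    qed (use u in auto)
    moreover have "((\<lambda>y. rescaled_kummer_integrand b q y s u) \<longlongrightarrow> rescaled_kummer_integrand b q 0 s u)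
        (at 0 within {0<..1/2})"
      unfolding rescaled_kummer_integrand_def by (intro tendsto_intros) auto
    moreover have "rescaled_kummer_integrand b q 0 s u = of_real u powr (b - 1) / of_real (exp (s * u))"
      by (simp add: rescaled_kummer_integrand_def exp_of_real[symmetric] exp_minus inverse_eq_divide)
    ultimately show ?thesis by (simp add: Lim_transform_eventually)
  qed
  have "((\<lambda>y. LINT u:{0<..}|lborel. g y u) \<longlongrightarrow>
          (LINT u:{0<..}|lborel. of_real u powr (b - 1) / of_real (exp (s * u)))) (at 0 within {0<..1/2})"
  proof (rule set_integral_dominated_convergence_at_within[where w = "\<lambda>u. C * (u powr (Re b - 1) * exp (- (s/2) * u))"])
    show "set_borel_measurable lborel {0<..} (g y)" for y
      unfolding set_borel_measurable_def g_def by measurable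
    show "set_integrable lborel {0<..} (\<lambda>u. C * (u powr (Re b - 1) * exp (- (s/2) * u)))"
      using b s by (intro set_integrable_mult_right set_integrable_real_scaled_Gamma_kernel) auto
    show "norm (g y u) \<le> C * (u powr (Re b - 1) * exp (- (s/2) * u))" if "y \<in> {0<..1/2}" "u \<in> {0<..}" for y u
      using norm_rescaled_kummer_integrand_le[of y s u b q] that s by (auto simp: g_def C_def indicator_def)
  qed (use lim in auto)
  then show ?thesis unfolding eq using set_integral_scaled_Gamma_kernel(2)[OF b s] by simp
qed

lemma norm_rescaled_kummer_integral_le:
  assumes b: "Re b > 0" and y: "0 < y" "y \<le> 1/2" and s: "s > 0"
  shows "norm (LINT u:{0<..1/(2*y)}|lborel. rescaled_kummer_integrand b q y s u) \<le>
           max 1 ((1/2) powr (Re q - 1)) * Gamma (Re b) * 2 powr (Re b) * s powr (- Re b)"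
proof -
  define C where "C = max 1 ((1/2) powr (Re q - 1))"
  define G where "G u = indicator {..1/(2*y)} u *\<^sub>R rescaled_kummer_integrand b q y s u" for u
  have int: "set_integrable lborel {0<..} (\<lambda>u. C * (u powr (Re b - 1) * exp (- (s/2) * u)))"
    using b s by (intro set_integrable_mult_right set_integrable_real_scaled_Gamma_kernel) auto
  have bound: "norm (G u) \<le> C * (u powr (Re b - 1) * exp (- (s/2) * u))" if "u \<in> {0<..}" for u
    using norm_rescaled_kummer_integrand_le[of y s u b q] y s that by (auto simp: indicator_def C_def G_def)
  have G_int: "set_integrable lborel {0<..} G"
  proof (rule set_integrable_bound[OF int])
    show "set_borel_measurable lborel {0<..} G"
      unfolding set_borel_measurable_def G_def by measurable
    show "AE u in lborel. u \<in> {0<..} \<longrightarrow> norm (G u) \<le> norm (C * (u powr (Re b - 1) * exp (- (s/2) * u)))"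
      using bound by (intro AE_I2 impI) (auto intro: order_trans[OF _ abs_ge_self])
  qed
  have "(LINT u:{0<..1/(2*y)}|lborel. rescaled_kummer_integrand b q y s u) = (LINT u:{0<..}|lborel. G u)"
    unfolding set_lebesgue_integral_def G_def
    by (intro Bochner_Integration.integral_cong) (auto simp: indicator_def)
  also have "norm \<dots> \<le> (LINT u:{0<..}|lborel. norm (G u))"
    by (rule set_integral_norm_bound[OF G_int])
  also have "\<dots> \<le> (LINT u:{0<..}|lborel. C * (u powr (Re b - 1) * exp (- (s/2) * u)))"
    by (rule set_integral_mono[OF set_integrable_norm[OF G_int] int]) (rule bound)
  also have "\<dots> = C * (Gamma (Re b) / (s/2) powr (Re b))"
    using set_integral_real_scaled_Gamma_kernel[of "Re b" "s/2"] b s by simp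
  also have "\<dots> = C * Gamma (Re b) * 2 powr (Re b) * s powr (- Re b)"
    using s by (simp add: powr_divide powr_minus field_simps)
  finally show ?thesis by (simp add: C_def)
qed

lemma norm_upper_kummer_integral_le:
  assumes b: "Re b > 0" and q: "Re q > 0" and l: "l \<ge> 0"
  shows "norm (LINT t:{1/2<..<1}|lborel. exp (of_real (- l) * of_real t) * beta_kernel b q t) \<le>
           exp (- l / 2) * Beta (Re b) (Re q)"
proof -
  have int: "set_integrable lborel {1/2<..<1} (\<lambda>t. exp (of_real (- l) * of_real t) * beta_kernel b q t)"
    by (rule set_integrable_subset[OF set_integrable_kummer_integrand[OF b q]]) auto
  have int_real: "set_integrable lborel A (\<lambda>t. t powr (Re b - 1) * (1 - t) powr (Re q - 1))"
    if "A \<subseteq> {0<..<1}" "A \<in> sets lborel" for A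
    using that by (intro set_integrable_subset[OF set_integrable_real_beta_kernel]) (use b q in auto)
  have "norm (LINT t:{1/2<..<1}|lborel. exp (of_real (- l) * of_real t) * beta_kernel b q t) \<le>
        (LINT t:{1/2<..<1}|lborel. norm (exp (of_real (- l) * of_real t) * beta_kernel b q t))"
    by (rule set_integral_norm_bound[OF int])
  also have "\<dots> \<le> (LINT t:{1/2<..<1}|lborel. exp (- l / 2) * (t powr (Re b - 1) * (1 - t) powr (Re q - 1)))"
  proof (rule set_integral_mono[OF set_integrable_norm[OF int]])
    show "set_integrable lborel {1/2<..<1} (\<lambda>t. exp (- l / 2) * (t powr (Re b - 1) * (1 - t) powr (Re q - 1)))"
      by (intro set_integrable_mult_right int_real) auto
    fix t :: real assume t: "t \<in> {1/2<..<1}"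
    then have "l * (1/2) \<le> l * t" using l by (intro mult_left_mono) auto
    then have "- l * t \<le> - l / 2" by simp
    then have "norm (exp (of_real (- l) * of_real t :: complex)) \<le> exp (- l / 2)"
      by (simp flip: of_real_mult)
    then show "norm (exp (of_real (- l) * of_real t) * beta_kernel b q t) \<le>
               exp (- l / 2) * (t powr (Re b - 1) * (1 - t) powr (Re q - 1))"
      using t unfolding norm_mult by (subst norm_beta_kernel) (auto intro: mult_right_mono)
  qed
  also have "\<dots> \<le> exp (- l / 2) * Beta (Re b) (Re q)"
  proof -
    have "{0<..<1} = {0<..1/2} \<union> {1/2<..<(1::real)}" by auto
    then have "(LINT t:{0<..<1}|lborel. t powr (Re b - 1) * (1 - t) powr (Re q - 1)) =
        (LINT t:{0<..1/2}|lborel. t powr (Re b - 1) * (1 - t) powr (Re q - 1)) +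
        (LINT t:{1/2<..<1}|lborel. t powr (Re b - 1) * (1 - t) powr (Re q - 1))"
      by (simp only:) (rule set_integral_Un; auto intro: int_real)
    then have "Beta (Re b) (Re q) =
        (LINT t:{0<..1/2}|lborel. t powr (Re b - 1) * (1 - t) powr (Re q - 1)) +
        (LINT t:{1/2<..<1}|lborel. t powr (Re b - 1) * (1 - t) powr (Re q - 1))"
      using b q by (simp add: set_integral_real_beta_kernel)
    moreover have "(LINT t:{0<..1/2}|lborel. t powr (Re b - 1) * (1 - t) powr (Re q - 1)) \<ge> 0"
      unfolding set_lebesgue_integral_def by (intro Bochner_Integration.integral_nonneg) (auto simp: indicator_def)
    ultimately show ?thesis by (simp add: mult_left_mono)
  qed
  finally show ?thesis .
qed

lemma powr_mult_exp_le:
  fixes x \<beta> :: real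
  assumes x: "x > 0" and \<beta>: "\<beta> > 0"
  shows "x powr \<beta> * exp (- x / 4) \<le> (4 * \<beta>) powr \<beta>"
proof -
  have "x / (4 * \<beta>) \<le> exp (x / (4 * \<beta>))"
    using exp_ge_add_one_self[of "x / (4 * \<beta>)"] by linarith
  then have "(x / (4 * \<beta>)) powr \<beta> \<le> exp (x / (4 * \<beta>)) powr \<beta>"
    using x \<beta> by (intro powr_mono2) auto
  also have "\<dots> = exp (x / 4)" using \<beta> by (simp add: powr_def)
  finally have "x powr \<beta> \<le> (4 * \<beta>) powr \<beta> * exp (x / 4)"
    using x \<beta> by (simp add: powr_divide field_simps)
  then show ?thesis by (simp add: exp_minus field_simps)
qed

lemma norm_upper_kummer_integral_rescaled_le:
  assumes b: "Re b > 0" and q: "Re q > 0" and y: "0 < y" "y \<le> 1/2" and s: "s > 0"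
  shows "norm (of_real y powr (-b) *
           (LINT t:{1/2<..<1}|lborel. exp (of_real ((1 - 1/y) * s) * of_real t) * beta_kernel b q t)) \<le>
         y powr (- Re b) * exp (- ((1/y - 1) * s) / 2) * Beta (Re b) (Re q)"
proof -
  have l: "(1/y - 1) * s \<ge> 0" using y s by (simp add: field_simps)
  have eq: "(1 - 1/y) * s = - ((1/y - 1) * s)" by (simp add: algebra_simps)
  have bound: "norm (LINT t:{1/2<..<1}|lborel. exp (of_real ((1 - 1/y) * s) * of_real t) * beta_kernel b q t) \<le>
        exp (- ((1/y - 1) * s) / 2) * Beta (Re b) (Re q)"
    unfolding eq by (rule norm_upper_kummer_integral_le[OF b q l])
  have "norm (of_real y powr (-b) *
           (LINT t:{1/2<..<1}|lborel. exp (of_real ((1 - 1/y) * s) * of_real t) * beta_kernel b q t)) =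
        y powr (- Re b) *
           norm (LINT t:{1/2<..<1}|lborel. exp (of_real ((1 - 1/y) * s) * of_real t) * beta_kernel b q t)"
    using y by (simp add: norm_mult norm_powr_real_powr)
  also have "\<dots> \<le> y powr (- Re b) * (exp (- ((1/y - 1) * s) / 2) * Beta (Re b) (Re q))"
    by (rule mult_left_mono[OF bound]) simp
  finally show ?thesis by (simp only: mult.assoc)
qed

lemma norm_upper_kummer_integral_rescaled_le_powr:
  assumes b: "Re b > 0" and q: "Re q > 0" and y: "0 < y" "y \<le> 1/2" and s: "s > 0"
  shows "norm (of_real y powr (-b) *
           (LINT t:{1/2<..<1}|lborel. exp (of_real ((1 - 1/y) * s) * of_real t) * beta_kernel b q t)) \<le>
         Beta (Re b) (Re q) * (4 * Re b) powr (Re b) * s powr (- Re b)"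
proof -
  have "1 / (2 * y) * s \<le> (1/y - 1) * s" using y s by (intro mult_right_mono) (auto simp: field_simps)
  then have "exp (- ((1/y - 1) * s) / 2) \<le> exp (- (s / y) / 4)" by (simp add: field_simps)
  then have "y powr (- Re b) * exp (- ((1/y - 1) * s) / 2) \<le> y powr (- Re b) * exp (- (s / y) / 4)"
    by (intro mult_left_mono) auto
  also have "\<dots> = s powr (- Re b) * ((s / y) powr (Re b) * exp (- (s / y) / 4))"
    using y s by (simp add: powr_divide powr_minus field_simps)
  also have "\<dots> \<le> s powr (- Re b) * (4 * Re b) powr (Re b)"
    using y s b by (intro mult_left_mono powr_mult_exp_le) auto
  finally have "y powr (- Re b) * exp (- ((1/y - 1) * s) / 2) * Beta (Re b) (Re q) \<le>
                s powr (- Re b) * (4 * Re b) powr (Re b) * Beta (Re b) (Re q)"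
    using b q by (intro mult_right_mono) (auto simp: Beta_def)
  then show ?thesis
    using norm_upper_kummer_integral_rescaled_le[OF b q y s] by (simp add: mult_ac)
qed

lemma tendsto_upper_kummer_integral_rescaled:
  assumes b: "Re b > 0" and q: "Re q > 0" and s: "s > 0"
  shows "((\<lambda>y. of_real y powr (-b) *
           (LINT t:{1/2<..<1}|lborel. exp (of_real ((1 - 1/y) * s) * of_real t) * beta_kernel b q t))
         \<longlongrightarrow> 0) (at 0 within {0<..1/2})"
proof (rule Lim_null_comparison)
  show "eventually (\<lambda>y. norm (of_real y powr (-b) *
          (LINT t:{1/2<..<1}|lborel. exp (of_real ((1 - 1/y) * s) * of_real t) * beta_kernel b q t)) \<le>
           y powr (- Re b) * exp (- ((1/y - 1) * s) / 2) * Beta (Re b) (Re q)) (at 0 within {0<..1/2})"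
    unfolding eventually_at_filter
    by (intro always_eventually allI impI norm_upper_kummer_integral_rescaled_le b q) (use s in auto)
  have "((\<lambda>y. y powr (- Re b) * exp (- ((1/y - 1) * s) / 2) * Beta (Re b) (Re q)) \<longlongrightarrow> 0) (at_right 0)"
    using b s by real_asymp
  then show "((\<lambda>y. y powr (- Re b) * exp (- ((1/y - 1) * s) / 2) * Beta (Re b) (Re q)) \<longlongrightarrow> 0) (at 0 within {0<..1/2})"
    by (rule tendsto_within_subset) auto
qed

lemma at_within_Ioc_at_right:
  fixes a b :: real
  assumes "a < b"
  shows "at a within {a<..b} = at_right a"
  by (rule at_within_nhd[where S = "{a - 1<..<b}"]) (use assms in auto)

text \<open>The lower half of Euler's integral yields \<open>\<Gamma>(b) s^(-b)\<close>; the upper half is exponentially small.\<close>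

lemma tendsto_kummer_integral_rescaled:
  assumes b: "Re b > 0" and q: "Re q > 0" and s: "s > 0"
  shows "((\<lambda>y. of_real y powr (-b) * kummer_integral b q (of_real ((1 - 1/y) * s)))
           \<longlongrightarrow> Gamma b / of_real s powr b) (at_right 0)"
proof -
  have lim: "((\<lambda>y. (LINT u:{0<..1/(2*y)}|lborel. rescaled_kummer_integrand b q y s u) +
            of_real y powr (-b) *
            (LINT t:{1/2<..<1}|lborel. exp (of_real ((1 - 1/y) * s) * of_real t) * beta_kernel b q t))
         \<longlongrightarrow> Gamma b / of_real s powr b + 0) (at 0 within {0<..1/2})"
    by (intro tendsto_add tendsto_rescaled_kummer_integral tendsto_upper_kummer_integral_rescaled b q s)
  have eq: "(LINT u:{0<..1/(2*y)}|lborel. rescaled_kummer_integrand b q y s u) +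
            of_real y powr (-b) *
            (LINT t:{1/2<..<1}|lborel. exp (of_real ((1 - 1/y) * s) * of_real t) * beta_kernel b q t) =
          of_real y powr (-b) * kummer_integral b q (of_real ((1 - 1/y) * s))" if "y > 0" for y
    unfolding kummer_integral_split[OF b q] distrib_left lower_kummer_integral_rescaled[OF that] ..
  have "eventually (\<lambda>y. (LINT u:{0<..1/(2*y)}|lborel. rescaled_kummer_integrand b q y s u) +
            of_real y powr (-b) *
            (LINT t:{1/2<..<1}|lborel. exp (of_real ((1 - 1/y) * s) * of_real t) * beta_kernel b q t) =
          of_real y powr (-b) * kummer_integral b q (of_real ((1 - 1/y) * s))) (at 0 within {0<..1/2})"
    unfolding eventually_at_filter by (intro always_eventually allI impI eq) auto
  from Lim_transform_eventually[OF lim this]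
  have "((\<lambda>y. of_real y powr (-b) * kummer_integral b q (of_real ((1 - 1/y) * s)))
           \<longlongrightarrow> Gamma b / of_real s powr b) (at 0 within {0<..1/2})"
    by simp
  moreover have "at (0::real) within {0<..1/2} = at_right 0" by (rule at_within_Ioc_at_right) simp
  ultimately show ?thesis by (simp only:)
qed

lemma kummer_integral_rescaled_bound:
  assumes b: "Re b > 0" and q: "Re q > 0"
  obtains K where "\<And>y s. 0 < y \<Longrightarrow> y \<le> 1/2 \<Longrightarrow> s > 0 \<Longrightarrow>
    norm (of_real y powr (-b) * kummer_integral b q (of_real ((1 - 1/y) * s))) \<le> K * s powr (- Re b)"
proof
  fix y s :: real assume y: "0 < y" "y \<le> 1/2" and s: "s > 0"
  have "norm (of_real y powr (-b) * kummer_integral b q (of_real ((1 - 1/y) * s))) \<le>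
        norm (LINT u:{0<..1/(2*y)}|lborel. rescaled_kummer_integrand b q y s u) +
        norm (of_real y powr (-b) *
          (LINT t:{1/2<..<1}|lborel. exp (of_real ((1 - 1/y) * s) * of_real t) * beta_kernel b q t))"
    unfolding kummer_integral_split[OF b q] distrib_left lower_kummer_integral_rescaled[OF y(1)]
    by (rule norm_triangle_ineq)
  also have "\<dots> \<le> (max 1 ((1/2) powr (Re q - 1)) * Gamma (Re b) * 2 powr (Re b) +
                   Beta (Re b) (Re q) * (4 * Re b) powr (Re b)) * s powr (- Re b)"
    using norm_rescaled_kummer_integral_le[OF b y s, of q] norm_upper_kummer_integral_rescaled_le_powr[OF b q y s]
    by (simp add: algebra_simps)
  finally show "norm (of_real y powr (-b) * kummer_integral b q (of_real ((1 - 1/y) * s))) \<le>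
        (max 1 ((1/2) powr (Re q - 1)) * Gamma (Re b) * 2 powr (Re b) +
         Beta (Re b) (Re q) * (4 * Re b) powr (Re b)) * s powr (- Re b)" .
qed

definition kummer_M_rescaled :: "complex \<Rightarrow> complex \<Rightarrow> real \<Rightarrow> real \<Rightarrow> complex" where
  "kummer_M_rescaled b c y s = of_real y powr (- b) * kummer_M b c (of_real ((1 - 1/y) * s))"

lemma tendsto_kummer_M_rescaled:
  assumes b: "Re b > 0" and c: "Re c > Re b" and s: "s > 0"
  shows "((\<lambda>y. kummer_M_rescaled b c y s) \<longlongrightarrow> Gamma c / Gamma (c - b) * of_real s powr (-b)) (at_right 0)"
proof -
  have "((\<lambda>y. of_real y powr (-b) * kummer_integral b (c - b) (of_real ((1 - 1/y) * s)) / Beta b (c - b))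
           \<longlongrightarrow> Gamma b / of_real s powr b / Beta b (c - b)) (at_right 0)"
    using b c s by (intro tendsto_divide tendsto_kummer_integral_rescaled Beta_nonzero tendsto_const) auto
  moreover have "Gamma b / of_real s powr b / Beta b (c - b) = Gamma c / Gamma (c - b) * of_real s powr (-b)"
    unfolding powr_minus_divide Gamma_div_Beta[OF b c, symmetric] by simp
  ultimately show ?thesis by (simp add: kummer_M_rescaled_def kummer_M_def)
qed

lemma kummer_M_rescaled_bound:
  assumes b: "Re b > 0" and c: "Re c > Re b"
  obtains K where "\<And>y s. 0 < y \<Longrightarrow> y \<le> 1/2 \<Longrightarrow> s > 0 \<Longrightarrow>
    norm (kummer_M_rescaled b c y s) \<le> K * s powr (- Re b)"
proof -
  obtain K where K: "\<And>y s. 0 < y \<Longrightarrow> y \<le> 1/2 \<Longrightarrow> s > 0 \<Longrightarrow>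
    norm (of_real y powr (-b) * kummer_integral b (c - b) (of_real ((1 - 1/y) * s))) \<le> K * s powr (- Re b)"
    using kummer_integral_rescaled_bound[of b "c - b"] b c by auto
  show ?thesis
  proof (rule that[of "K / norm (Beta b (c - b))"])
    fix y s :: real assume "0 < y" "y \<le> 1/2" "s > 0"
    then have "norm (kummer_M_rescaled b c y s) \<le> K * s powr (- Re b) / norm (Beta b (c - b))"
      using K[of y s] by (simp add: kummer_M_rescaled_def kummer_M_def norm_mult norm_divide divide_right_mono)
    then show "norm (kummer_M_rescaled b c y s) \<le> K / norm (Beta b (c - b)) * s powr (- Re b)"
      by simp
  qed
qed

section \<open>A Laplace-type integral representation of \<open>F\<^sub>A\<close>\<close>

lemma has_sum_prod_UNIV:
  fixes f :: "'n::finite \<Rightarrow> nat \<Rightarrow> 'c::{real_normed_field,banach,second_countable_topology}"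
  assumes S: "\<And>k. (f k has_sum S k) UNIV" and abs: "\<And>k. (\<lambda>j. norm (f k j)) summable_on UNIV"
  shows "((\<lambda>m. \<Prod>k\<in>UNIV. f k (m k)) has_sum (\<Prod>k\<in>UNIV. S k)) UNIV"
proof -
  have "Infinite_Set_Sum.abs_summable_on (f k) UNIV" for k
    using abs_summable_equivalent[of "f k" UNIV] abs[of k] by simp
  then have "Infinite_Set_Sum.abs_summable_on (\<lambda>m. \<Prod>k\<in>UNIV. f k (m k)) (PiE UNIV (\<lambda>_. UNIV))"
    by (intro abs_summable_on_prod_PiE) auto
  then have "(\<lambda>m. norm (\<Prod>k\<in>UNIV. f k (m k))) summable_on UNIV"
    using abs_summable_equivalent[of "\<lambda>m. \<Prod>k\<in>UNIV. f k (m k)" UNIV] by simp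
  then have summable: "(\<lambda>m. \<Prod>k\<in>UNIV. f k (m k)) summable_on UNIV"
    by (rule abs_summable_summable)
  have "infsum (\<lambda>m. \<Prod>k\<in>UNIV. f k (m k)) (PiE UNIV (\<lambda>_. UNIV)) = (\<Prod>k\<in>UNIV. infsum (f k) UNIV)"
    by (rule infsum_prod_PiE_abs) (use abs in auto)
  also have "\<dots> = (\<Prod>k\<in>UNIV. S k)" using S by (intro prod.cong refl infsumI)
  finally show ?thesis using summable by (simp add: summable_iff_has_sum_infsum)
qed

lemma exp_has_sum: "((\<lambda>j. u ^ j / fact j) has_sum exp u) UNIV" for u :: real
proof (rule norm_summable_imp_has_sum)
  show "summable (\<lambda>j. norm (u ^ j / fact j))"
    using summable_exp[of "norm u"] by (simp add: norm_divide norm_power divide_inverse mult_ac abs_mult power_abs)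
  show "(\<lambda>j. u ^ j / fact j) sums exp u"
    using exp_converges[of u] by (simp add: divide_inverse mult_ac)
qed

lemma infinite_UNIV_fun_nat: "infinite (UNIV :: ('n \<Rightarrow> nat) set)"
proof
  assume "finite (UNIV :: ('n \<Rightarrow> nat) set)"
  then have "finite (range (\<lambda>n::nat. (\<lambda>_::'n. n)))" by (rule finite_subset[rotated]) auto
  moreover have "inj (\<lambda>n::nat. (\<lambda>_::'n. n))" by (auto simp: inj_def fun_eq_iff)
  ultimately show False using finite_imageD by blast
qed

lemma sum_prod_exp_series_le:
  fixes L r :: "'n::finite \<Rightarrow> real"
  assumes F: "finite F" and L: "\<And>k. L k \<ge> 0" and r: "\<And>k. r k \<ge> 0"
  shows "(\<Sum>m\<in>F. \<Prod>k\<in>UNIV. L k * (r k ^ m k / fact (m k))) \<le> (\<Prod>k\<in>UNIV. L k) * exp (\<Sum>k\<in>UNIV. r k)"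
proof -
  have "((\<lambda>m. \<Prod>k\<in>UNIV. L k * (r k ^ m k / fact (m k))) has_sum (\<Prod>k\<in>UNIV. L k * exp (r k))) UNIV"
  proof (rule has_sum_prod_UNIV)
    show "((\<lambda>j. L k * (r k ^ j / fact j)) has_sum L k * exp (r k)) UNIV" for k
      by (intro has_sum_cmult_right exp_has_sum)
    show "(\<lambda>j. norm (L k * (r k ^ j / fact j))) summable_on UNIV" for k
      using has_sum_cmult_right[OF exp_has_sum[of "r k"], of "L k"] L[of k] r[of k]
      by (auto simp: summable_on_def abs_mult)
  qed
  then have "(\<Sum>m\<in>F. \<Prod>k\<in>UNIV. L k * (r k ^ m k / fact (m k))) \<le> (\<Prod>k\<in>UNIV. L k * exp (r k))"
    using L r by (intro finite_sum_le_has_sum[OF _ F]) (auto intro!: prod_nonneg)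
  also have "\<dots> = (\<Prod>k\<in>UNIV. L k) * exp (\<Sum>k\<in>UNIV. r k)"
    by (simp add: prod.distrib exp_sum)
  finally show ?thesis .
qed

text \<open>The term \<open>m\<close> equals \<open>\<integral>\<^sub>0\<^sup>\<infinity> s^(\<alpha>-1) e^(-s) \<Prod>\<^sub>k L\<^sub>k (r\<^sub>k s)^m\<^sub>k / m\<^sub>k! ds\<close>, so each finite
  partial sum is bounded by \<open>\<integral>\<^sub>0\<^sup>\<infinity> s^(\<alpha>-1) e^(-(1 - \<Sum>\<^sub>k r\<^sub>k) s) \<Prod>\<^sub>k L\<^sub>k ds\<close>.\<close>

lemma Gamma_multi_series_summable_on:
  fixes L r :: "'n::finite \<Rightarrow> real" and \<alpha> :: real
  assumes \<alpha>: "\<alpha> > 0" and L: "\<And>k. L k \<ge> 0" and r: "\<And>k. r k \<ge> 0" and r_sum: "(\<Sum>k\<in>UNIV. r k) < 1"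
  shows "(\<lambda>m::'n\<Rightarrow>nat. Gamma (\<alpha> + real (\<Sum>k\<in>UNIV. m k)) * (\<Prod>k\<in>UNIV. L k * r k ^ m k / fact (m k)))
           summable_on UNIV"
proof -
  define N where "N m = (\<Sum>k\<in>UNIV. m k)" for m :: "'n \<Rightarrow> nat"
  define co where "co m = (\<Prod>k\<in>UNIV. L k * r k ^ m k / fact (m k))" for m :: "'n \<Rightarrow> nat"
  define h where "h m s = s powr (\<alpha> - 1) * exp (- s) * (\<Prod>k\<in>UNIV. L k * ((r k * s) ^ m k / fact (m k)))"
    for m s
  define B where "B s = (\<Prod>k\<in>UNIV. L k) * (s powr (\<alpha> - 1) * exp (- (1 - (\<Sum>k\<in>UNIV. r k)) * s))" for s
  have co: "co m \<ge> 0" for m unfolding co_def using L r by (intro prod_nonneg) auto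
  have h_eq: "h m s = co m * (s powr (\<alpha> + real (N m) - 1) * exp (- 1 * s))" if s: "s > 0" for m s
  proof -
    have "(\<Prod>k\<in>UNIV. L k * ((r k * s) ^ m k / fact (m k))) = (\<Prod>k\<in>UNIV. s ^ m k * (L k * r k ^ m k / fact (m k)))"
      by (intro prod.cong) (simp_all add: power_mult_distrib field_simps)
    also have "\<dots> = co m * s ^ N m"
      unfolding prod.distrib co_def N_def power_sum by (simp add: mult.commute)
    finally show ?thesis
      using s by (simp add: h_def powr_add[symmetric] powr_realpow[symmetric] algebra_simps)
  qed
  have h_int: "set_integrable lborel {0<..} (h m)"
    and h_integral: "(LINT s:{0<..}|lborel. h m s) = Gamma (\<alpha> + real (N m)) * co m" for m
  proof -
    have "set_integrable lborel {0<..} (\<lambda>s. co m * (s powr (\<alpha> + real (N m) - 1) * exp (- 1 * s)))"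
      using \<alpha> by (intro set_integrable_mult_right set_integrable_real_scaled_Gamma_kernel) auto
    also have "?this \<longleftrightarrow> set_integrable lborel {0<..} (h m)"
      by (intro set_integrable_cong) (auto simp: h_eq)
    finally show "set_integrable lborel {0<..} (h m)" .
    have "(LINT s:{0<..}|lborel. h m s) = (LINT s:{0<..}|lborel. co m * (s powr (\<alpha> + real (N m) - 1) * exp (- 1 * s)))"
      by (intro set_lebesgue_integral_cong) (auto simp: h_eq)
    then show "(LINT s:{0<..}|lborel. h m s) = Gamma (\<alpha> + real (N m)) * co m"
      using set_integral_real_scaled_Gamma_kernel[of "\<alpha> + real (N m)" 1] \<alpha> by simp
  qed
  have h_sum_le: "(\<Sum>m\<in>F. h m s) \<le> B s" if F: "finite F" and s: "s > 0" for F s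
  proof -
    have "(\<Sum>m\<in>F. \<Prod>k\<in>UNIV. L k * ((r k * s) ^ m k / fact (m k))) \<le> (\<Prod>k\<in>UNIV. L k) * exp (\<Sum>k\<in>UNIV. r k * s)"
      using F L r s by (intro sum_prod_exp_series_le) auto
    then have "s powr (\<alpha> - 1) * exp (- s) * (\<Sum>m\<in>F. \<Prod>k\<in>UNIV. L k * ((r k * s) ^ m k / fact (m k))) \<le>
        s powr (\<alpha> - 1) * exp (- s) * ((\<Prod>k\<in>UNIV. L k) * exp (\<Sum>k\<in>UNIV. r k * s))"
      by (intro mult_left_mono) auto
    also have "\<dots> = B s"
      by (simp add: B_def algebra_simps exp_add[symmetric] sum_distrib_left)
    finally show ?thesis by (simp add: h_def sum_distrib_left)
  qed
  have B_int: "set_integrable lborel {0<..} B"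
    unfolding B_def using \<alpha> r_sum
    by (intro set_integrable_mult_right set_integrable_real_scaled_Gamma_kernel) auto
  have "(\<lambda>m. Gamma (\<alpha> + real (N m)) * co m) summable_on UNIV"
  proof (rule nonneg_bdd_above_summable_on[OF _ bdd_aboveI2])
    show "0 \<le> Gamma (\<alpha> + real (N m)) * co m" for m
      using \<alpha> co[of m] by (intro mult_nonneg_nonneg Gamma_real_nonneg) auto
    fix F :: "('n \<Rightarrow> nat) set" assume "F \<in> {F. F \<subseteq> UNIV \<and> finite F}"
    then have F: "finite F" by auto
    have "(\<Sum>m\<in>F. Gamma (\<alpha> + real (N m)) * co m) = (LINT s:{0<..}|lborel. (\<Sum>m\<in>F. h m s))"
      by (simp add: set_integral_sum h_int h_integral)
    also have "\<dots> \<le> (LINT s:{0<..}|lborel. B s)"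
      using F h_sum_le by (intro set_integral_mono set_integrable_sum h_int B_int) auto
    finally show "(\<Sum>m\<in>F. Gamma (\<alpha> + real (N m)) * co m) \<le> (LINT s:{0<..}|lborel. B s)" .
  qed
  then show ?thesis by (simp add: N_def co_def)
qed

lemma prod_kummer_M_has_sum:
  fixes b c :: "complex^'n::finite" and w :: "'n \<Rightarrow> complex"
  assumes b: "\<forall>k. Re (b$k) > 0" and c: "\<forall>k. Re (c$k) > Re (b$k)"
  shows "((\<lambda>m. \<Prod>k\<in>UNIV. pochhammer (b$k) (m k) / pochhammer (c$k) (m k) * w k ^ m k / fact (m k))
           has_sum (\<Prod>k\<in>UNIV. kummer_M (b$k) (c$k) (w k))) UNIV"
proof (rule has_sum_prod_UNIV)
  show "((\<lambda>j. pochhammer (b$k) j / pochhammer (c$k) j * w k ^ j / fact j) has_sum kummer_M (b$k) (c$k) (w k)) UNIV"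
    for k using b c by (intro kummer_M_has_sum) auto
  fix k
  define L where "L = kummer_M_bound (b$k) (c$k)"
  have bound: "norm (pochhammer (b$k) j / pochhammer (c$k) j * w k ^ j / fact j) \<le> L * (norm (w k) ^ j / fact j)"
    for j
  proof -
    have "norm (pochhammer (b$k) j / pochhammer (c$k) j * w k ^ j / fact j) =
          norm (pochhammer (b$k) j / pochhammer (c$k) j) * (norm (w k) ^ j / fact j)"
      by (simp add: norm_mult norm_divide norm_power)
    also have "\<dots> \<le> L * (norm (w k) ^ j / fact j)"
      unfolding L_def using b c by (intro mult_right_mono norm_pochhammer_ratio_le) auto
    finally show ?thesis .
  qed
  have "summable (\<lambda>j. L * (norm (w k) ^ j / fact j))"
    using has_sum_imp_sums[OF has_sum_cmult_right[OF exp_has_sum, of L]] by (rule sums_summable)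
  then have "summable (\<lambda>j. norm (pochhammer (b$k) j / pochhammer (c$k) j * w k ^ j / fact j))"
    by (rule summable_comparison_test[rotated]) (use bound in auto)
  then show "(\<lambda>j. norm (pochhammer (b$k) j / pochhammer (c$k) j * w k ^ j / fact j)) summable_on UNIV"
    by (subst summable_on_UNIV_nonneg_real_iff) auto
qed

lemma norm_prod_kummer_M_le:
  fixes b c :: "complex^'n::finite"
  assumes b: "\<forall>k. Re (b$k) > 0" and c: "\<forall>k. Re (c$k) > Re (b$k)" and w: "\<And>k. Re (w k) \<le> \<rho> k"
  shows "norm (\<Prod>k\<in>UNIV. kummer_M (b$k) (c$k) (w k)) \<le>
           exp (\<Sum>k\<in>UNIV. max 0 (\<rho> k)) * (\<Prod>k\<in>UNIV. kummer_M_bound (b$k) (c$k))"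
proof -
  have "norm (kummer_M (b$k) (c$k) (w k)) \<le> exp (max 0 (\<rho> k)) * kummer_M_bound (b$k) (c$k)" for k
  proof -
    have "norm (kummer_M (b$k) (c$k) (w k)) \<le> exp (max 0 (Re (w k))) * kummer_M_bound (b$k) (c$k)"
      using b c by (intro norm_kummer_M_le) auto
    also have "\<dots> \<le> exp (max 0 (\<rho> k)) * kummer_M_bound (b$k) (c$k)"
      using b c w[of k] by (intro mult_right_mono kummer_M_bound_nonneg) auto
    finally show ?thesis .
  qed
  then have "norm (\<Prod>k\<in>UNIV. kummer_M (b$k) (c$k) (w k)) \<le>
      (\<Prod>k\<in>UNIV. exp (max 0 (\<rho> k)) * kummer_M_bound (b$k) (c$k))"
    unfolding prod_norm[symmetric] by (intro prod_mono) auto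
  then show ?thesis by (simp add: prod.distrib exp_sum)
qed

definition FA_laplace :: "complex \<Rightarrow> complex^'n::finite \<Rightarrow> complex^'n \<Rightarrow> ('n \<Rightarrow> real) \<Rightarrow> complex \<Rightarrow> complex" where
  "FA_laplace a b c x z = (LINT s:{0<..}|lborel. of_real s powr (a - 1) / of_real (exp s) *
       (\<Prod>k\<in>UNIV. kummer_M (b$k) (c$k) (z * of_real (x k * s)))) / Gamma a"

text \<open>For \<open>x \<le> 0\<close> and \<open>Re z > -\<eta>\<close> the product of Kummer functions is \<open>O(e^(s/2))\<close>.\<close>

lemma holomorphic_FA_laplace:
  fixes b c :: "complex^'n::finite"
  assumes a: "Re a > 0" and b: "\<forall>k. Re (b$k) > 0" and c: "\<forall>k. Re (c$k) > Re (b$k)"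
    and x: "\<forall>k. x k \<le> 0" and \<eta>: "\<eta> > 0" "\<eta> * (\<Sum>k\<in>UNIV. \<bar>x k\<bar>) \<le> 1/2"
  shows "FA_laplace a b c x holomorphic_on {z. Re z > - \<eta>}"
proof -
  define L where "L = (\<Prod>k\<in>UNIV. kummer_M_bound (b$k) (c$k))"
  have "(\<lambda>z. LINT s:{0<..}|lborel. of_real s powr (a - 1) / of_real (exp s) *
       (\<Prod>k\<in>UNIV. kummer_M (b$k) (c$k) (z * of_real (x k * s)))) holomorphic_on {z. Re z > - \<eta>}"
  proof (rule holomorphic_on_set_integral[where h = "\<lambda>s. L * (s powr (Re a - 1) * exp (- (1/2) * s))"])
    show "set_borel_measurable lborel {0<..} (\<lambda>s. of_real s powr (a - 1) / of_real (exp s) *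
       (\<Prod>k\<in>UNIV. kummer_M (b$k) (c$k) (z * of_real (x k * s))))" for z
    proof -
      have [measurable]: "(\<lambda>s. \<Prod>k\<in>UNIV. kummer_M (b$k) (c$k) (z * of_real (x k * s))) \<in> borel_measurable borel"
        using b c by (intro borel_measurable_prod borel_measurable_kummer_M) auto
      show ?thesis unfolding set_borel_measurable_def by measurable
    qed
    show "set_integrable lborel {0<..} (\<lambda>s. L * (s powr (Re a - 1) * exp (- (1/2) * s)))"
      using a by (intro set_integrable_mult_right set_integrable_real_scaled_Gamma_kernel) auto
    fix z :: complex and s :: real assume z: "z \<in> {z. Re z > - \<eta>}" and s: "s \<in> {0<..}"
    have "Re (z * of_real (x k * s)) \<le> \<eta> * \<bar>x k\<bar> * s" for k
    proof -
      have "Re z * (x k * s) \<le> (- \<eta>) * (x k * s)"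
        using z s x by (intro mult_right_mono_neg) (auto simp: mult_nonpos_nonneg)
      then show ?thesis using x s by simp
    qed
    then have "norm (\<Prod>k\<in>UNIV. kummer_M (b$k) (c$k) (z * of_real (x k * s))) \<le>
        exp (\<Sum>k\<in>UNIV. max 0 (\<eta> * \<bar>x k\<bar> * s)) * L"
      unfolding L_def by (intro norm_prod_kummer_M_le b c)
    also have "(\<Sum>k\<in>UNIV. max 0 (\<eta> * \<bar>x k\<bar> * s)) = \<eta> * (\<Sum>k\<in>UNIV. \<bar>x k\<bar>) * s"
      using \<eta> s by (simp add: sum_distrib_left sum_distrib_right mult_ac)
    also have "exp (\<eta> * (\<Sum>k\<in>UNIV. \<bar>x k\<bar>) * s) * L \<le> exp ((1/2) * s) * L"
      unfolding L_def using \<eta> s b c by (intro mult_right_mono prod_nonneg kummer_M_bound_nonneg) auto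
    finally have prod_bound: "norm (\<Prod>k\<in>UNIV. kummer_M (b$k) (c$k) (z * of_real (x k * s))) \<le> exp ((1/2) * s) * L" .
    have "norm (of_real s powr (a - 1) / of_real (exp s) * (\<Prod>k\<in>UNIV. kummer_M (b$k) (c$k) (z * of_real (x k * s)))) =
          s powr (Re a - 1) / exp s * norm (\<Prod>k\<in>UNIV. kummer_M (b$k) (c$k) (z * of_real (x k * s)))"
      using s by (simp add: norm_mult norm_divide norm_powr_real_powr)
    also have "\<dots> \<le> s powr (Re a - 1) / exp s * (exp ((1/2) * s) * L)"
      by (intro mult_left_mono prod_bound) auto
    also have "\<dots> = L * (s powr (Re a - 1) * exp (- (1/2) * s))"
      by (simp add: field_simps exp_minus exp_add[symmetric] flip: exp_diff)
    finally show "norm (of_real s powr (a - 1) / of_real (exp s) *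
       (\<Prod>k\<in>UNIV. kummer_M (b$k) (c$k) (z * of_real (x k * s)))) \<le> L * (s powr (Re a - 1) * exp (- (1/2) * s))" .
  qed (use b c in \<open>auto intro!: holomorphic_intros holomorphic_kummer_M simp: open_halfspace_Re_gt\<close>)
  then show ?thesis unfolding FA_laplace_def[abs_def] by (intro holomorphic_intros) auto
qed

text \<open>Since \<open>\<integral>\<^sub>0\<^sup>\<infinity> s^(a+n-1) e^(-s) ds = \<Gamma>(a) (a)\<^sub>n\<close>, integrating termwise produces the Pochhammer
  factors; the majorant makes the integrals of the absolute values of the terms summable.\<close>

lemma has_sum_laplace_multi_series:
  fixes Q :: "('n::finite \<Rightarrow> nat) \<Rightarrow> complex" and G :: "real \<Rightarrow> complex" and L r :: "'n \<Rightarrow> real"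
  assumes a: "Re a > 0"
    and series: "\<And>s. s > 0 \<Longrightarrow> ((\<lambda>m. Q m * of_real s ^ (\<Sum>k\<in>UNIV. m k)) has_sum G s) UNIV"
    and Q: "\<And>m. norm (Q m) \<le> (\<Prod>k\<in>UNIV. L k * r k ^ m k / fact (m k))"
    and L: "\<And>k. L k \<ge> 0" and r: "\<And>k. r k \<ge> 0" and r_sum: "(\<Sum>k\<in>UNIV. r k) < 1"
  shows "((\<lambda>m. pochhammer a (\<Sum>k\<in>UNIV. m k) * Q m) has_sum
           (LINT s:{0<..}|lborel. of_real s powr (a - 1) / of_real (exp s) * G s) / Gamma a) UNIV"
proof -
  define N where "N m = (\<Sum>k\<in>UNIV. m k)" for m :: "'n \<Rightarrow> nat"
  define f where "f m s = Q m / Gamma a * (of_real s powr (a + of_nat (N m) - 1) / of_real (exp s))" for m s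
  have aN: "Re (a + of_nat (N m)) > 0" for m using a by simp
  have pointwise: "((\<lambda>m. f m s) has_sum (of_real s powr (a - 1) / of_real (exp s) * G s / Gamma a)) UNIV"
    if s: "s \<in> {0<..}" for s
  proof -
    have "f m s = of_real s powr (a - 1) / of_real (exp s) / Gamma a * (Q m * of_real s ^ N m)" for m
    proof -
      have "(of_real s powr (a + of_nat (N m) - 1) :: complex) = of_real s powr (a - 1) * of_real s powr (of_nat (N m))"
        by (subst powr_add[symmetric]) (simp add: algebra_simps)
      also have "(of_real s powr (of_nat (N m)) :: complex) = of_real s ^ N m"
        using s by (simp add: powr_nat)
      finally show ?thesis by (simp add: f_def mult_ac)
    qed
    moreover have "((\<lambda>m. of_real s powr (a - 1) / of_real (exp s) / Gamma a * (Q m * of_real s ^ N m)) has_sum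
        (of_real s powr (a - 1) / of_real (exp s) / Gamma a * G s)) UNIV"
      using s series unfolding N_def by (intro has_sum_cmult_right) auto
    ultimately show ?thesis by simp
  qed
  have f_int: "set_integrable lborel {0<..} (f m)" for m
    unfolding f_def by (intro set_integrable_mult_right set_integrable_Gamma_kernel aN)
  have f_integral: "(LINT s:{0<..}|lborel. f m s) = pochhammer a (N m) * Q m" for m
  proof -
    have "(LINT s:{0<..}|lborel. f m s) = Q m / Gamma a * Gamma (a + of_nat (N m))"
      unfolding f_def set_integral_mult_right set_integral_Gamma_kernel[OF aN] ..
    moreover have "pochhammer a (N m) = Gamma (a + of_nat (N m)) / Gamma a"
      using a by (intro pochhammer_Gamma Re_pos_not_nonpos_Ints)
    ultimately show ?thesis by simp
  qed
  have f_norm_integral: "(LINT s:{0<..}|lborel. norm (f m s)) = Gamma (Re a + real (N m)) * norm (Q m) / norm (Gamma a)"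
    for m
  proof -
    have "(LINT s:{0<..}|lborel. norm (f m s)) =
          (LINT s:{0<..}|lborel. norm (Q m) / norm (Gamma a) * (s powr (Re a + real (N m) - 1) * exp (- 1 * s)))"
      by (intro set_lebesgue_integral_cong)
         (auto simp: f_def norm_mult norm_divide norm_powr_real_powr exp_minus field_simps)
    then show ?thesis
      using set_integral_real_scaled_Gamma_kernel[of "Re a + real (N m)" 1] a by simp
  qed
  have summable: "(\<lambda>m. LINT s:{0<..}|lborel. norm (f m s)) summable_on UNIV"
  proof (rule summable_on_comparison_test)
    show "(\<lambda>m. Gamma (Re a + real (N m)) * (\<Prod>k\<in>UNIV. L k * r k ^ m k / fact (m k)) / norm (Gamma a))
            summable_on UNIV"
      using summable_on_cmult_left[OF Gamma_multi_series_summable_on[OF a L r r_sum], where c = "1 / norm (Gamma a)"]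
      by (simp add: N_def)
    fix m :: "'n \<Rightarrow> nat"
    show "0 \<le> (LINT s:{0<..}|lborel. norm (f m s))"
      unfolding set_lebesgue_integral_def by (intro Bochner_Integration.integral_nonneg) auto
    have "Gamma (Re a + real (N m)) > 0" using a by (intro Gamma_real_pos) linarith
    then show "(LINT s:{0<..}|lborel. norm (f m s)) \<le>
        Gamma (Re a + real (N m)) * (\<Prod>k\<in>UNIV. L k * r k ^ m k / fact (m k)) / norm (Gamma a)"
      unfolding f_norm_integral by (intro divide_right_mono mult_left_mono Q) auto
  qed
  have "(LINT s:{0<..}|lborel. of_real s powr (a - 1) / of_real (exp s) * G s / Gamma a) =
        (LINT s:{0<..}|lborel. of_real s powr (a - 1) / of_real (exp s) * G s) / Gamma a"
    by (rule set_integral_divide_zero)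
  then show ?thesis
    using set_integral_has_sum[OF infinite_UNIV_fun_nat f_int summable pointwise]
    by (simp add: f_integral N_def)
qed

lemma FA_laplace_eq_FA_series:
  fixes b c :: "complex^'n::finite"
  assumes a: "Re a > 0" and b: "\<forall>k. Re (b$k) > 0" and c: "\<forall>k. Re (c$k) > Re (b$k)"
    and z: "norm z * (\<Sum>k\<in>UNIV. \<bar>x k\<bar>) < 1"
  shows "FA_laplace a b c x z = FA_series a b c (\<chi> k. z * of_real (x k))"
proof -
  define P where "P k j = pochhammer (b$k) j / pochhammer (c$k) j * (z * of_real (x k)) ^ j / fact j" for k j
  have "((\<lambda>m. pochhammer a (\<Sum>k\<in>UNIV. m k) * (\<Prod>k\<in>UNIV. P k (m k))) has_sum FA_laplace a b c x z) UNIV"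
    unfolding FA_laplace_def
  proof (rule has_sum_laplace_multi_series
      [where L = "\<lambda>k. kummer_M_bound (b$k) (c$k)" and r = "\<lambda>k. norm z * \<bar>x k\<bar>", OF a])
    show "((\<lambda>m. (\<Prod>k\<in>UNIV. P k (m k)) * of_real s ^ (\<Sum>k\<in>UNIV. m k)) has_sum
            (\<Prod>k\<in>UNIV. kummer_M (b$k) (c$k) (z * of_real (x k * s)))) UNIV" for s
      using prod_kummer_M_has_sum[OF b c, of "\<lambda>k. z * of_real (x k * s)"]
      by (simp add: P_def power_mult_distrib power_sum prod.distrib[symmetric] mult_ac)
    show "norm (\<Prod>k\<in>UNIV. P k (m k)) \<le> (\<Prod>k\<in>UNIV. kummer_M_bound (b$k) (c$k) * (norm z * \<bar>x k\<bar>) ^ m k / fact (m k))"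
      for m
    proof -
      have "norm (P k (m k)) \<le> kummer_M_bound (b$k) (c$k) * (norm z * \<bar>x k\<bar>) ^ m k / fact (m k)" for k
      proof -
        have "norm (P k (m k)) =
            norm (pochhammer (b$k) (m k) / pochhammer (c$k) (m k)) * ((norm z * \<bar>x k\<bar>) ^ m k / fact (m k))"
          by (simp add: P_def norm_mult norm_divide norm_power)
        also have "\<dots> \<le> kummer_M_bound (b$k) (c$k) * ((norm z * \<bar>x k\<bar>) ^ m k / fact (m k))"
          using b c by (intro mult_right_mono norm_pochhammer_ratio_le) auto
        finally show ?thesis by simp
      qed
      then show ?thesis unfolding prod_norm[symmetric] by (intro prod_mono) auto
    qed
  qed (use b c z in \<open>auto intro: kummer_M_bound_nonneg simp: sum_distrib_left\<close>)
  then show ?thesis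
    unfolding FA_series_def FA_term_def by (simp add: P_def infsumI mult_ac)
qed

lemma LauricellaFA_eqI:
  fixes y :: "complex^'n::finite"
  assumes S: "open S" "connected S" "closed_segment 0 1 \<subseteq> S" and g: "g holomorphic_on S"
    and e: "e > 0" "ball 0 e \<subseteq> S" and eq: "\<forall>z\<in>ball 0 e. g z = FA_series a b c (\<chi> k. z * y$k)"
  shows "LauricellaFA a b c y = g 1"
  unfolding LauricellaFA_def
proof (rule the_equality)
  show "\<exists>g' S' e'. open S' \<and> connected S' \<and> closed_segment 0 1 \<subseteq> S' \<and> g' holomorphic_on S' \<and> e' > 0 \<and>
          ball 0 e' \<subseteq> S' \<and> (\<forall>z\<in>ball 0 e'. g' z = FA_series a b c (\<chi> k. z * y$k)) \<and> g 1 = g' 1"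
    using S g e eq by blast
  fix w assume "\<exists>g' S' e'. open S' \<and> connected S' \<and> closed_segment 0 1 \<subseteq> S' \<and> g' holomorphic_on S' \<and> e' > 0 \<and>
          ball 0 e' \<subseteq> S' \<and> (\<forall>z\<in>ball 0 e'. g' z = FA_series a b c (\<chi> k. z * y$k)) \<and> w = g' 1"
  then obtain g' S' e' where S': "open S'" "closed_segment 0 1 \<subseteq> S'" and g': "g' holomorphic_on S'"
    and e': "e' > 0" "ball 0 e' \<subseteq> S'" and eq': "\<forall>z\<in>ball 0 e'. g' z = FA_series a b c (\<chi> k. z * y$k)"
    and w: "w = g' 1" by blast
  define C where "C = connected_component_set (S \<inter> S') 0"
  have "closed_segment 0 1 \<subseteq> C"
    unfolding C_def by (rule connected_component_maximal) (use S S' in auto)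
  moreover have ball: "ball 0 (min e e') \<subseteq> C"
    unfolding C_def by (rule connected_component_maximal) (use e e' in auto)
  moreover have "C \<subseteq> S \<inter> S'" unfolding C_def by (rule connected_component_subset)
  moreover have "open C" using S S' by (auto simp: C_def intro: open_connected_component)
  ultimately have "g' 1 = g 1"
    using g g' e e' eq eq'
    by (intro analytic_continuation_open[of "ball 0 (min e e')" C g' g 1])
       (auto simp: C_def intro: holomorphic_on_subset)
  then show "w = g 1" using w by simp
qed

lemma LauricellaFA_eq_FA_laplace:
  fixes b c :: "complex^'n::finite"
  assumes a: "Re a > 0" and b: "\<forall>k. Re (b$k) > 0" and c: "\<forall>k. Re (c$k) > Re (b$k)"
    and x: "\<forall>k. x k \<le> 0"
  shows "LauricellaFA a b c (\<chi> k. of_real (x k)) = FA_laplace a b c x 1"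
proof -
  define X where "X = (\<Sum>k\<in>UNIV. \<bar>x k\<bar>)"
  define \<eta> where "\<eta> = 1 / (2 * (1 + X))"
  have X: "X \<ge> 0" unfolding X_def by (intro sum_nonneg) auto
  then have \<eta>: "\<eta> > 0" "\<eta> * X \<le> 1/2" by (auto simp: \<eta>_def field_simps)
  have convex: "convex {z::complex. Re z > - \<eta>}" by (rule convex_halfspace_Re_gt)
  show ?thesis
  proof (rule LauricellaFA_eqI[OF open_halfspace_Re_gt convex_connected[OF convex] _ _ \<eta>(1)])
    show "FA_laplace a b c x holomorphic_on {z. Re z > - \<eta>}"
      using \<eta> by (intro holomorphic_FA_laplace a b c x) (auto simp: X_def)
    show "closed_segment 0 1 \<subseteq> {z. Re z > - \<eta>}"
      using \<eta> by (intro closed_segment_subset[OF _ _ convex]) auto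
    show "ball 0 \<eta> \<subseteq> {z. Re z > - \<eta>}"
    proof
      fix z :: complex assume "z \<in> ball 0 \<eta>"
      then show "z \<in> {z. Re z > - \<eta>}" using abs_Re_le_cmod[of z] by simp
    qed
    show "\<forall>z\<in>ball 0 \<eta>. FA_laplace a b c x z = FA_series a b c (\<chi> k. z * (\<chi> k. of_real (x k))$k)"
    proof
      fix z :: complex assume "z \<in> ball 0 \<eta>"
      then have "norm z * X \<le> \<eta> * X" using X by (intro mult_right_mono) auto
      then have "norm z * X < 1" using \<eta> by linarith
      then show "FA_laplace a b c x z = FA_series a b c (\<chi> k. z * (\<chi> k. of_real (x k))$k)"
        using FA_laplace_eq_FA_series[OF a b c] by (simp add: X_def)
    qed
  qed
qed

section \<open>Passage to the limit\<close>

lemma set_integral_Gamma_kernel_prod_powr: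
  fixes \<beta> L :: "'n::finite \<Rightarrow> complex"
  assumes "Re (a - (\<Sum>k\<in>UNIV. \<beta> k)) > 0"
  shows "(LINT s:{0<..}|lborel. of_real s powr (a - 1) / of_real (exp s) * (\<Prod>k\<in>UNIV. L k * of_real s powr (- \<beta> k))) =
           Gamma (a - (\<Sum>k\<in>UNIV. \<beta> k)) * (\<Prod>k\<in>UNIV. L k)"
proof -
  have integrand: "of_real s powr (a - 1) / of_real (exp s) * (\<Prod>k\<in>UNIV. L k * of_real s powr (- \<beta> k)) =
        (\<Prod>k\<in>UNIV. L k) * (of_real s powr (a - (\<Sum>k\<in>UNIV. \<beta> k) - 1) / of_real (exp s))" if "s > 0" for s
  proof -
    have "(\<Prod>k\<in>UNIV. L k * (of_real s :: complex) powr (- \<beta> k)) =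
          (\<Prod>k\<in>UNIV. L k) * of_real s powr (- (\<Sum>k\<in>UNIV. \<beta> k))"
      using that by (simp add: prod.distrib powr_sum sum_negf[symmetric])
    moreover have "(of_real s :: complex) powr (a - 1) * of_real s powr (- (\<Sum>k\<in>UNIV. \<beta> k)) =
        of_real s powr (a - (\<Sum>k\<in>UNIV. \<beta> k) - 1)"
      by (simp add: powr_add[symmetric] algebra_simps)
    ultimately show ?thesis by (metis (no_types, lifting) mult.left_commute times_divide_eq_left)
  qed
  have "(LINT s:{0<..}|lborel. of_real s powr (a - 1) / of_real (exp s) * (\<Prod>k\<in>UNIV. L k * of_real s powr (- \<beta> k))) =
        (LINT s:{0<..}|lborel. (\<Prod>k\<in>UNIV. L k) * (of_real s powr (a - (\<Sum>k\<in>UNIV. \<beta> k) - 1) / of_real (exp s)))"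
    by (intro set_lebesgue_integral_cong allI impI integrand) auto
  also have "\<dots> = (\<Prod>k\<in>UNIV. L k) * Gamma (a - (\<Sum>k\<in>UNIV. \<beta> k))"
    unfolding set_integral_mult_right set_integral_Gamma_kernel[OF assms] ..
  finally show ?thesis by (simp only: mult.commute)
qed

lemma tendsto_Gamma_integral_prod:
  fixes \<phi> :: "'n::finite \<Rightarrow> 'a::first_countable_topology \<Rightarrow> real \<Rightarrow> complex"
    and \<beta> L :: "'n \<Rightarrow> complex" and K :: "'n \<Rightarrow> real"
  assumes a: "Re a > (\<Sum>k\<in>UNIV. Re (\<beta> k))"
    and meas: "\<And>k y. y \<in> T \<Longrightarrow> \<phi> k y \<in> borel_measurable borel"
    and bound: "\<And>k y s. y \<in> T \<Longrightarrow> s > 0 \<Longrightarrow> norm (\<phi> k y s) \<le> K k * s powr (- Re (\<beta> k))"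
    and lim: "\<And>k s. s > 0 \<Longrightarrow> ((\<lambda>y. \<phi> k y s) \<longlongrightarrow> L k * of_real s powr (- \<beta> k)) (at x within T)"
  shows "((\<lambda>y. LINT s:{0<..}|lborel. of_real s powr (a - 1) / of_real (exp s) * (\<Prod>k\<in>UNIV. \<phi> k y s))
           \<longlongrightarrow> Gamma (a - (\<Sum>k\<in>UNIV. \<beta> k)) * (\<Prod>k\<in>UNIV. L k)) (at x within T)"
proof -
  define \<alpha> where "\<alpha> = a - (\<Sum>k\<in>UNIV. \<beta> k)"
  have \<alpha>: "Re \<alpha> > 0" and Re_\<alpha>: "Re \<alpha> = Re a - (\<Sum>k\<in>UNIV. Re (\<beta> k))"
    using a by (simp_all add: \<alpha>_def Re_sum)
  have lim_integral: "((\<lambda>y. LINT s:{0<..}|lborel. of_real s powr (a - 1) / of_real (exp s) * (\<Prod>k\<in>UNIV. \<phi> k y s))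
      \<longlongrightarrow> (LINT s:{0<..}|lborel. of_real s powr (a - 1) / of_real (exp s) *
                               (\<Prod>k\<in>UNIV. L k * of_real s powr (- \<beta> k)))) (at x within T)"
  proof (rule set_integral_dominated_convergence_at_within
      [where w = "\<lambda>s. (\<Prod>k\<in>UNIV. K k) * (s powr (Re \<alpha> - 1) * exp (- 1 * s))"])
    show "set_borel_measurable lborel {0<..} (\<lambda>s. of_real s powr (a - 1) / of_real (exp s) * (\<Prod>k\<in>UNIV. \<phi> k y s))"
      if "y \<in> T" for y
    proof -
      have [measurable]: "(\<lambda>s. \<Prod>k\<in>UNIV. \<phi> k y s) \<in> borel_measurable borel"
        using meas[OF that] by (intro borel_measurable_prod) auto
      show ?thesis unfolding set_borel_measurable_def by measurable
    qed
    show "set_integrable lborel {0<..} (\<lambda>s. (\<Prod>k\<in>UNIV. K k) * (s powr (Re \<alpha> - 1) * exp (- 1 * s)))"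
      using \<alpha> by (intro set_integrable_mult_right set_integrable_real_scaled_Gamma_kernel) auto
    show "((\<lambda>y. of_real s powr (a - 1) / of_real (exp s) * (\<Prod>k\<in>UNIV. \<phi> k y s)) \<longlongrightarrow>
            of_real s powr (a - 1) / of_real (exp s) * (\<Prod>k\<in>UNIV. L k * of_real s powr (- \<beta> k))) (at x within T)"
      if "s \<in> {0<..}" for s
      using that by (intro tendsto_intros lim) auto
    fix y and s :: real assume y: "y \<in> T" and s: "s \<in> {0<..}"
    have "norm (\<Prod>k\<in>UNIV. \<phi> k y s) \<le> (\<Prod>k\<in>UNIV. K k * s powr (- Re (\<beta> k)))"
      unfolding prod_norm[symmetric] using bound y s by (intro prod_mono) auto
    also have "\<dots> = (\<Prod>k\<in>UNIV. K k) * s powr (- (\<Sum>k\<in>UNIV. Re (\<beta> k)))"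
      using s by (simp add: prod.distrib powr_sum sum_negf[symmetric])
    finally have "s powr (Re a - 1) / exp s * norm (\<Prod>k\<in>UNIV. \<phi> k y s) \<le>
        s powr (Re a - 1) / exp s * ((\<Prod>k\<in>UNIV. K k) * s powr (- (\<Sum>k\<in>UNIV. Re (\<beta> k))))"
      by (intro mult_left_mono) auto
    also have "\<dots> = (\<Prod>k\<in>UNIV. K k) * (s powr (Re \<alpha> - 1) * exp (- 1 * s))"
      using s by (simp add: Re_\<alpha> powr_add[symmetric] exp_minus field_simps)
    finally show "norm (of_real s powr (a - 1) / of_real (exp s) * (\<Prod>k\<in>UNIV. \<phi> k y s)) \<le>
        (\<Prod>k\<in>UNIV. K k) * (s powr (Re \<alpha> - 1) * exp (- 1 * s))"
      using s by (simp add: norm_mult norm_divide norm_powr_real_powr)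
  qed
  show ?thesis
    using lim_integral set_integral_Gamma_kernel_prod_powr[of a \<beta> L] \<alpha> by (simp add: \<alpha>_def)
qed

lemma filterlim_vec_nth_at_right_0:
  fixes T :: "(real^'n) set"
  assumes "\<And>y. y \<in> T \<Longrightarrow> y$k > 0"
  shows "filterlim (\<lambda>y. y$k) (at_right 0) (at 0 within T)"
  unfolding filterlim_at
proof
  show "\<forall>\<^sub>F y in at 0 within T. y$k \<in> {0<..} \<and> y$k \<noteq> 0"
  proof -
    have "y$k \<in> {0<..} \<and> y$k \<noteq> 0" if "y \<in> T" for y using assms[OF that] by simp
    then show ?thesis unfolding eventually_at_filter by (intro always_eventually) blast
  qed
  show "((\<lambda>y. y$k) \<longlongrightarrow> 0) (at 0 within T)"
    using tendsto_vec_nth[OF tendsto_ident_at[of 0 T], of k] by simp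
qed

lemma at_0_within_positive_orthant_eq:
  assumes "r > 0"
  shows "at (0::real^'n) within {y. \<forall>k. y$k \<in> {0<..r}} = at 0 within {y. \<forall>k. 0 < y$k}"
proof (rule at_within_nhd[where S = "ball 0 r"])
  have "y$k \<le> r" if "y \<in> ball 0 r" for y :: "real^'n" and k
    using that component_le_norm_cart[of y k] by simp
  then show "{y::real^'n. \<forall>k. y$k \<in> {0<..r}} \<inter> ball 0 r - {0} = {y. \<forall>k. 0 < y$k} \<inter> ball 0 r - {0}"
    by auto
qed (use assms in auto)

lemma LauricellaFA_rescaled_eq_integral:
  fixes b c :: "complex^'n::finite" and y :: "real^'n"
  assumes a: "Re a > 0" and b: "\<forall>k. Re (b$k) > 0" and c: "\<forall>k. Re (c$k) > Re (b$k)"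
    and y: "\<forall>k. y$k \<in> {0<..1}"
  shows "(\<Prod>k\<in>UNIV. complex_of_real (y$k) powr (- (b$k))) * LauricellaFA a b c (\<chi> k. 1 - 1 / complex_of_real (y$k)) =
    (LINT s:{0<..}|lborel. of_real s powr (a - 1) / of_real (exp s) *
       (\<Prod>k\<in>UNIV. kummer_M_rescaled (b$k) (c$k) (y$k) s)) / Gamma a"
proof -
  have "(\<chi> k. 1 - 1 / complex_of_real (y$k)) = (\<chi> k. of_real (1 - 1 / y$k))" by simp
  moreover have "LauricellaFA a b c (\<chi> k. of_real (1 - 1 / y$k)) = FA_laplace a b c (\<lambda>k. 1 - 1 / y$k) 1"
    using y by (intro LauricellaFA_eq_FA_laplace a b c) (auto simp: field_simps)
  ultimately show ?thesis
    by (simp add: FA_laplace_def kummer_M_rescaled_def prod.distrib mult_ac flip: set_integral_mult_right)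
qed

lemma tendsto_laplace_kummer_M_rescaled:
  fixes a :: complex and b c :: "complex^'n::finite"
  assumes a: "Re a > (\<Sum>k\<in>UNIV. Re (b$k))" and b: "\<forall>k. Re (b$k) > 0" and c: "\<forall>k. Re (c$k) > Re (b$k)"
  shows "((\<lambda>y. LINT s:{0<..}|lborel. of_real s powr (a - 1) / of_real (exp s) *
             (\<Prod>k\<in>UNIV. kummer_M_rescaled (b$k) (c$k) (y$k) s))
           \<longlongrightarrow> Gamma (a - (\<Sum>k\<in>UNIV. b$k)) * (\<Prod>k\<in>UNIV. Gamma (c$k) / Gamma (c$k - b$k)))
         (at 0 within {y. \<forall>k. y$k \<in> {0<..1/2}})"
proof -
  have "\<forall>k. \<exists>K. \<forall>y s. 0 < y \<longrightarrow> y \<le> 1/2 \<longrightarrow> s > 0 \<longrightarrow>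
      norm (kummer_M_rescaled (b$k) (c$k) y s) \<le> K * s powr (- Re (b$k))"
    by (metis kummer_M_rescaled_bound b c)
  then obtain K where K: "\<And>k y s. 0 < y \<Longrightarrow> y \<le> 1/2 \<Longrightarrow> s > 0 \<Longrightarrow>
      norm (kummer_M_rescaled (b$k) (c$k) y s) \<le> K k * s powr (- Re (b$k))"
    by metis
  show ?thesis
  proof (rule tendsto_Gamma_integral_prod[where K = K])
    show "kummer_M_rescaled (b$k) (c$k) (y$k) \<in> borel_measurable borel" for k y
      using b c unfolding kummer_M_rescaled_def
      by (intro borel_measurable_times borel_measurable_const borel_measurable_kummer_M) auto
    show "((\<lambda>y. kummer_M_rescaled (b$k) (c$k) (y$k) s) \<longlongrightarrow> Gamma (c$k) / Gamma (c$k - b$k) * of_real s powr (- (b$k)))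
            (at 0 within {y. \<forall>k. y$k \<in> {0<..1/2}})" if "s > 0" for k s
      using b c that
      by (intro filterlim_compose[OF tendsto_kummer_M_rescaled filterlim_vec_nth_at_right_0]) auto
  qed (use a K in auto)
qed

theorem corollary1:
  fixes a :: complex and b c :: "complex^'n::finite"
  assumes "Re a > Re (\<Sum>k\<in>UNIV. b$k)" and "Re (\<Sum>k\<in>UNIV. b$k) > 0"
    and "\<forall>k. Re (c$k) > Re (b$k)" and "\<forall>k. Re (b$k) > 0"
  shows "((\<lambda>y::real^'n. (\<Prod>k\<in>UNIV. (complex_of_real (y$k)) powr (- (b$k))) *
            LauricellaFA a b c (\<chi> k. 1 - 1 / complex_of_real (y$k)))
         \<longlongrightarrow> Gamma (a - (\<Sum>k\<in>UNIV. b$k)) / Gamma a *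
               (\<Prod>k\<in>UNIV. Gamma (c$k) / Gamma (c$k - b$k)))
         (at 0 within {y. \<forall>k. y$k > 0})"
proof -
  note b = assms(4) and c = assms(3)
  have a: "Re a > 0" using assms(1,2) by linarith
  define T where "T = {y::real^'n. \<forall>k. y$k \<in> {0<..1/2}}"
  define I where "I y = (LINT s:{0<..}|lborel. of_real s powr (a - 1) / of_real (exp s) *
      (\<Prod>k\<in>UNIV. kummer_M_rescaled (b$k) (c$k) (y$k) s))" for y :: "real^'n"
  have "((\<lambda>y. I y / Gamma a) \<longlongrightarrow>
      Gamma (a - (\<Sum>k\<in>UNIV. b$k)) * (\<Prod>k\<in>UNIV. Gamma (c$k) / Gamma (c$k - b$k)) / Gamma a) (at 0 within T)"
    unfolding I_def T_def using assms(1) a b c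
    by (intro tendsto_divide tendsto_laplace_kummer_M_rescaled tendsto_const Gamma_nonzero Re_pos_not_nonpos_Ints)
       (auto simp: Re_sum)
  moreover have "\<forall>\<^sub>F y in at 0 within T. I y / Gamma a =
      (\<Prod>k\<in>UNIV. complex_of_real (y$k) powr (- (b$k))) * LauricellaFA a b c (\<chi> k. 1 - 1 / complex_of_real (y$k))"
    unfolding eventually_at_filter I_def T_def
    by (intro always_eventually allI impI LauricellaFA_rescaled_eq_integral[OF a b c, symmetric])
       (simp add: order_trans[of _ "1/2"])
  moreover have "at (0::real^'n) within T = at 0 within {y. \<forall>k. y$k > 0}"
    unfolding T_def by (rule at_0_within_positive_orthant_eq) simp
  ultimately show ?thesis
    by (auto dest: Lim_transform_eventually)
qed

end
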